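(* Let $x_1,x_2,\ldots$ be independent and identically distributed with true density $f_0$. For $j=1,2$ let $M_j=\{f_j(x\mid\theta_j),\,\pi_j(\theta_j),\,\theta_j\in\mathbb{F}_j\}$ be a Bayesian model consisting of a parametric family of densities $f_j(\cdot\mid\theta_j)$ indexed by $\theta_j\in\mathbb{F}_j$ and a prior $\pi_j$ on $\mathbb{F}_j$, and define the Bayes factor $$B_{12}=\frac{\int_{\mathbb{F}_1}\prod_{i=1}^n f_1(x_i\mid\theta_1)\,\pi_1(d\theta_1)}{\int_{\mathbb{F}_2}\prod_{i=1}^n f_2(x_i\mid\theta_2)\,\pi_2(d\theta_2)}.$$ Suppose that: (i) $f_0$ is in the Kullback--Leibler support of $\pi_2$: for every $\epsilon>0$, $\pi_2[\theta_2: d_K\{f_0(\cdot),f_2(\cdot\mid\theta_2)\}<\epsilon]>0$; (ii) for every $c>0$, almost surely under $f_0$, for all sufficiently large $n$, $$\sup_{\theta_1\in\mathbb{F}_1}\prod_{i=1}^n\frac{f_1(x_i\mid\theta_1)}{f_0(x_i)}<e^{nc};$$ (iii) $\inf_{\theta_1\in\mathbb{F}_1} d_H\{f_1(\cdot\mid\theta_1),f_0(\cdot)\}>0$. Then $B_{12}\to 0$ almost surely under $f_0$ as $n\to\infty$.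
   Context: $d_K(f,g)=\int f\log(f/g)$ is the Kullback--Leibler divergence and $d_H(f,g)=\{\int(\sqrt f-\sqrt g)^2\}^{1/2}$ is the Hellinger distance. *)

theory Defs
  imports "HOL-Probability.Probability"
begin

text \<open>Kullback--Leibler divergence d_K(f,g) = integral of f log(f/g) w.r.t. the base measure mu,
  valued in the extended reals, with the conventions 0 log(0/g) = 0 and f log(f/0) = +infinity
  for f > 0. It is split into the positive and negative parts of the integrand.\<close>

definition kl_pos :: "('b \<Rightarrow> real) \<Rightarrow> ('b \<Rightarrow> real) \<Rightarrow> 'b \<Rightarrow> ennreal" where
  "kl_pos f g x = (if f x = 0 then 0 else if g x = 0 then \<infinity>
                   else ennreal (f x * ln (f x / g x)))"

definition kl_neg :: "('b \<Rightarrow> real) \<Rightarrow> ('b \<Rightarrow> real) \<Rightarrow> 'b \<Rightarrow> ennreal" where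
  "kl_neg f g x = ennreal (if f x > 0 \<and> g x > 0 then - (f x * ln (f x / g x)) else 0)"

definition kl_div :: "'b measure \<Rightarrow> ('b \<Rightarrow> real) \<Rightarrow> ('b \<Rightarrow> real) \<Rightarrow> ereal" where
  "kl_div \<mu> f g = enn2ereal (\<integral>\<^sup>+ x. kl_pos f g x \<partial>\<mu>) - enn2ereal (\<integral>\<^sup>+ x. kl_neg f g x \<partial>\<mu>)"

text \<open>Hellinger distance d_H(f,g) = (integral of (sqrt f - sqrt g)^2)^(1/2).
  (For probability densities the integral is at most 2, hence finite.)\<close>

definition hellinger_dist :: "'b measure \<Rightarrow> ('b \<Rightarrow> real) \<Rightarrow> ('b \<Rightarrow> real) \<Rightarrow> real" where
  "hellinger_dist \<mu> f g =
     sqrt (enn2real (\<integral>\<^sup>+ x. ennreal ((sqrt (f x) - sqrt (g x))\<^sup>2) \<partial>\<mu>))"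

definition marginal_lik :: "'p measure \<Rightarrow> ('p \<Rightarrow> 'b \<Rightarrow> real) \<Rightarrow> (nat \<Rightarrow> 'b) \<Rightarrow> nat \<Rightarrow> ennreal" where
  "marginal_lik P f x n = (\<integral>\<^sup>+ \<theta>. ennreal (\<Prod>i<n. f \<theta> (x i)) \<partial>P)"

definition bayes_factor ::
  "'p measure \<Rightarrow> ('p \<Rightarrow> 'b \<Rightarrow> real) \<Rightarrow> 'q measure \<Rightarrow> ('q \<Rightarrow> 'b \<Rightarrow> real)
     \<Rightarrow> (nat \<Rightarrow> 'b) \<Rightarrow> nat \<Rightarrow> ennreal" where
  "bayes_factor P1 f1 P2 f2 x n = marginal_lik P1 f1 x n / marginal_lik P2 f2 x n"

end

theory Submission
  imports Defs
begin

text \<open>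
  Numerator: by Fubini and independence, the expected prior integral of the product of
  sqrt(f1/f0) over the sample is the prior integral of the n-th power of the Hellinger affinity
  integral sqrt(f1 f0) = 1 - dH^2/2, hence at most q^n with q < 1 by (iii); Markov's inequality
  and Borel--Cantelli turn this into an almost sure exponential bound. The likelihood ratio is at
  most the square root of its supremum times its own square root, so condition (ii) costs only a
  factor e^(nc/2) and the numerator decays exponentially.

  Denominator: if dK(f0, f2(theta)) < delta, the strong law of large numbers for the log
  likelihood ratios gives prod f2/f0 >= e^(-2 delta n) eventually; by Fubini this holds at once for
  almost all such theta, which carry positive prior mass by (i). Hence the denominator decays
  more slowly than any exponential.

  It follows by splitting off a bounded part
  (Hoeffding) and a nonnegative remainder of small mean (Etemadi's dyadic blocks with Chebyshev).
\<close>

lemma truncated_square_sum_rem_le: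
  fixes w :: real assumes w: "w \<ge> 0"
  shows "(\<Sum>m<M. (if w \<le> 2^m then w\<^sup>2 / 2^m else 0)) + (if w \<le> 2^M then 2 * w\<^sup>2 / 2^M else 2 * w) \<le> 2 * w"
proof (induction M)
  case 0
  then show ?case using w by (auto simp: power2_eq_square mult_left_le)
next
  case (Suc M)
  show ?case
  proof (cases "w \<le> 2^M")
    case True
    have "(2::real)^M \<le> 2^Suc M" by simp
    then have "w \<le> 2^Suc M" using True by linarith
    then show ?thesis using Suc True by (simp add: field_simps)
  next
    case False
    then have "2^M < w" by simp
    have "(if w \<le> 2 ^ Suc M then 2 * w\<^sup>2 / 2 ^ Suc M else 2 * w) \<le> 2 * w"
    proof (cases "w \<le> 2 ^ Suc M")
      case True
      have "w\<^sup>2 / 2^M = w * (w / 2^M)" by (simp add: power2_eq_square)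
      also have "\<dots> \<le> w * 2" using True w by (intro mult_left_mono) (auto simp: field_simps)
      finally show ?thesis using True by simp
    qed simp
    then show ?thesis using Suc False by simp
  qed
qed

lemma truncated_square_sum_le:
  fixes w :: real assumes w: "w \<ge> 0"
  shows "(\<Sum>m<M. (if w \<le> 2^m then w\<^sup>2 / 2^m else 0)) \<le> 2 * w"
proof -
  have "0 \<le> (if w \<le> 2^M then 2 * w\<^sup>2 / 2^M else 2 * w)" using w by simp
  then show ?thesis using truncated_square_sum_rem_le[OF w, of M] by linarith
qed

lemma sum_exceedance_indicator_le:
  fixes w :: real assumes w: "w \<ge> 0"
  shows "(\<Sum>i<K. (if real i + 1 < w then 1 else 0::real)) \<le> min (real K) w"
proof (induction K)
  case 0 then show ?case using w by simp
next
  case (Suc K) then show ?case by (auto simp: min_def split: if_splits)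
qed

lemma square_le_square_of_abs_le: fixes a C :: real assumes "\<bar>a\<bar> \<le> C" shows "a * a \<le> C * C"
proof -
  have "\<bar>a\<bar> * \<bar>a\<bar> \<le> C * C" by (rule mult_mono) (use assms in auto)
  then show ?thesis by (simp add: abs_mult[symmetric])
qed

text \<open>Interpolating between dyadic times costs the factor 2 in front of the mean.\<close>

lemma sum_le_of_truncated_dyadic_sums_less:
  fixes w :: "nat \<Rightarrow> real"
  assumes nn: "\<And>i. w i \<ge> 0" and "a \<ge> 0" "t > 0"
    and index: "eventually (\<lambda>i. w i \<le> real i + 1) sequentially"
    and dyadic: "eventually (\<lambda>m. (\<Sum>i<(2::nat)^m. (if w i \<le> real i + 1 then w i else 0))
      < real ((2::nat)^m) * a) sequentially"
  shows "eventually (\<lambda>n. (\<Sum>i<n. w i) \<le> real n * (2 * a + t)) sequentially"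
proof -
  define T where "T i = (if w i \<le> real i + 1 then w i else 0)" for i
  have T_nn: "T i \<ge> 0" for i using nn[of i] by (simp add: T_def)
  from index obtain i0 where i0: "\<And>i. i \<ge> i0 \<Longrightarrow> w i \<le> real i + 1"
    unfolding eventually_sequentially by blast
  from dyadic obtain m0 where m0: "\<And>m. m \<ge> m0 \<Longrightarrow> (\<Sum>i<(2::nat)^m. T i) < real ((2::nat)^m) * a"
    unfolding eventually_sequentially T_def by blast
  define C where "C = (\<Sum>i<i0. w i)"
  obtain K :: nat where K: "C / t \<le> real K" using real_arch_simple by blast
  show ?thesis unfolding eventually_sequentially
  proof (intro exI[of _ "max (max K 1) (2^m0)"] allI impI)
    fix n assume n: "max (max K 1) (2^m0) \<le> n"
    obtain m where m: "2^m \<le> n" "n < 2^(m+1)"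
      using ex_power_ivl1[of 2 n] n by auto
    have "m0 \<le> m + 1"
    proof (rule ccontr)
      assume "\<not> m0 \<le> m + 1"
      then have "(2::nat)^(m+1) \<le> 2^m0" by (intro power_increasing) auto
      then show False using m n by linarith
    qed
    have "(\<Sum>i<n. w i) \<le> (\<Sum>i<n. (if i < i0 then w i else 0)) + (\<Sum>i<n. T i)"
      using i0 nn by (auto simp: T_def sum.distrib[symmetric] intro!: sum_mono)
    also have "(\<Sum>i<n. (if i < i0 then w i else 0)) \<le> C"
    proof -
      have "(\<Sum>i<n. (if i < i0 then w i else 0)) \<le> (\<Sum>i<n + i0. (if i < i0 then w i else 0))"
        by (rule sum_mono2) (use nn in auto)
      also have "\<dots> = (\<Sum>i\<in>{..<n+i0} \<inter> {i. i < i0}. w i)"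
        by (subst sum.If_cases) auto
      also have "{..<n+i0} \<inter> {i. i < i0} = {..<i0}" by auto
      finally show ?thesis unfolding C_def .
    qed
    also have "(\<Sum>i<n. T i) \<le> (\<Sum>i<(2::nat)^(m+1). T i)"
      by (rule sum_mono2) (use m T_nn in auto)
    also have "\<dots> \<le> real ((2::nat)^(m+1)) * a" using m0[OF \<open>m0 \<le> m + 1\<close>] by simp
    also have "\<dots> \<le> 2 * real n * a"
      using m(1) \<open>a \<ge> 0\<close> by (intro mult_right_mono) auto
    also have "C \<le> real n * t"
    proof -
      have "C \<le> real K * t" using K \<open>t > 0\<close> by (simp add: field_simps)
      also have "\<dots> \<le> real n * t" using n \<open>t > 0\<close> by (intro mult_right_mono) auto
      finally show ?thesis .
    qed
    finally show "(\<Sum>i<n. w i) \<le> real n * (2 * a + t)" by (simp add: algebra_simps)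
  qed
qed

lemma exp_neg_mult_LIMSEQ_zero:
  fixes c :: real assumes "c > 0"
  shows "(\<lambda>n. exp (- c * real n)) \<longlonglongrightarrow> 0"
proof -
  have "(\<lambda>n. exp (- c) ^ n) \<longlonglongrightarrow> 0" by (rule LIMSEQ_power_zero) (use assms in simp)
  then show ?thesis by (simp add: exp_of_nat_mult[symmetric] mult.commute)
qed

lemma real_sqrt_prod: "sqrt (\<Prod>i\<in>A. a i) = (\<Prod>i\<in>A. sqrt (a i))"
  by (induction A rule: infinite_finite_induct) (auto simp: real_sqrt_mult)

section \<open>A one-sided strong law of large numbers\<close>

lemma (in prob_space) integral_comp_eq_of_distr_eq:
  assumes "distr M borel (W i) = distr M borel (W 0)" "W i \<in> borel_measurable M" "W 0 \<in> borel_measurable M"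
    "(g::real\<Rightarrow>real) \<in> borel_measurable borel"
  shows "expectation (\<lambda>x. g (W i x)) = expectation (\<lambda>x. g (W 0 x))"
  by (metis assms integral_distr)

lemma (in prob_space) integrable_bounded:
  fixes f :: "'a \<Rightarrow> real"
  assumes "f \<in> borel_measurable M" "\<And>x. x \<in> space M \<Longrightarrow> \<bar>f x\<bar> \<le> B"
  shows "integrable M f"
  by (rule integrable_const_bound[where B=B]) (use assms in auto)

lemma (in prob_space) variance_sum_indep_le:
  fixes Y :: "'i \<Rightarrow> 'a \<Rightarrow> real"
  assumes fin: "finite I" and ind: "indep_vars (\<lambda>_. borel) Y I"
    and bnd: "\<And>i x. i \<in> I \<Longrightarrow> x \<in> space M \<Longrightarrow> \<bar>Y i x\<bar> \<le> C"
  shows "variance (\<lambda>x. \<Sum>i\<in>I. Y i x) \<le> (\<Sum>i\<in>I. expectation (\<lambda>x. (Y i x)\<^sup>2))"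
proof -
  have [measurable]: "\<And>i. i \<in> I \<Longrightarrow> Y i \<in> borel_measurable M"
    using ind unfolding indep_vars_def by blast
  have C: "C \<ge> 0" if ne: "I \<noteq> {}" 
  proof -
    obtain i where "i \<in> I" using ne by auto
    obtain x where "x \<in> space M" using not_empty by auto
    then show ?thesis using bnd[OF \<open>i\<in>I\<close> \<open>x \<in> space M\<close>] by linarith
  qed
  have intY: "integrable M (Y i)" if "i \<in> I" for i
    by (rule integrable_const_bound[where B=C]) (use that bnd in auto)
  define m where "m i = expectation (Y i)" for i
  define D where "D i x = Y i x - m i" for i x
  have [measurable]: "\<And>i. i \<in> I \<Longrightarrow> D i \<in> borel_measurable M"
    unfolding D_def by measurable
  have intD: "integrable M (D i)" if "i \<in> I" for i
  proof -
    have "integrable M (\<lambda>x. Y i x - m i)" using intY[OF that] by simp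
    moreover have "(\<lambda>x. Y i x - m i) = D i" by (rule ext) (simp add: D_def)
    ultimately show ?thesis by simp
  qed
  have bD: "\<bar>D i x\<bar> \<le> 2 * C" if "i \<in> I" "x \<in> space M" for i x
  proof -
    have "\<bar>m i\<bar> \<le> expectation (\<lambda>x. \<bar>Y i x\<bar>)" unfolding m_def by (rule integral_abs_bound)
    also have "\<dots> \<le> expectation (\<lambda>x. C)"
      by (rule integral_mono) (use intY[OF that(1)] bnd[OF that(1)] in auto)
    finally have "\<bar>m i\<bar> \<le> C" by (simp add: prob_space)
    then show ?thesis using bnd[OF that] unfolding D_def by linarith
  qed
  have intDD: "integrable M (\<lambda>x. D i x * D j x)" if "i \<in> I" "j \<in> I" for i j
  proof (rule integrable_const_bound[where B="2*C*(2*C)"])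
    show "AE x in M. norm (D i x * D j x) \<le> 2 * C * (2 * C)"
    proof (intro AE_I2)
      fix x assume x: "x \<in> space M"
      have a: "\<bar>D i x\<bar> \<le> 2*C" "\<bar>D j x\<bar> \<le> 2*C" using bD that x by auto
      have "\<bar>D i x\<bar> * \<bar>D j x\<bar> \<le> 2*C * (2*C)"
        by (rule mult_mono[OF a]) (use a in auto)
      then show "norm (D i x * D j x) \<le> 2 * C * (2 * C)" by (simp add: abs_mult)
    qed
  qed (use that in measurable)
  have ES: "expectation (\<lambda>x. \<Sum>i\<in>I. Y i x) = (\<Sum>i\<in>I. m i)"
    unfolding m_def using intY by (simp add: integral_sum)
  have eq: "(\<lambda>x. ((\<Sum>i\<in>I. Y i x) - expectation (\<lambda>x. \<Sum>i\<in>I. Y i x))\<^sup>2) = 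
        (\<lambda>x. \<Sum>i\<in>I. \<Sum>j\<in>I. D i x * D j x)"
    by (rule ext) (simp only: ES D_def sum_subtractf[symmetric] power2_eq_square sum_product)
  have off: "expectation (\<lambda>x. D i x * D j x) = 0" if "i \<in> I" "j \<in> I" "i \<noteq> j" for i j
  proof -
    have ind2: "indep_vars (\<lambda>_. borel) D {i, j}"
      unfolding D_def
      by (rule indep_vars_compose2[OF indep_vars_subset[OF ind], where Y="\<lambda>i v. v - m i"])
         (use that in auto)
    have "expectation (\<lambda>x. \<Prod>k\<in>{i,j}. D k x) = (\<Prod>k\<in>{i,j}. expectation (D k))"
      by (rule indep_vars_lebesgue_integral[OF _ ind2])
         (use that intD in auto)
    moreover have "expectation (D i) = 0"
      using intY[OF that(1)] unfolding D_def m_def by (simp add: prob_space)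
    ultimately show ?thesis using that by simp
  qed
  have "variance (\<lambda>x. \<Sum>i\<in>I. Y i x) = (\<Sum>i\<in>I. \<Sum>j\<in>I. expectation (\<lambda>x. D i x * D j x))"
    unfolding eq using intDD by (simp add: integral_sum integrable_sum)
  also have "\<dots> = (\<Sum>i\<in>I. expectation (\<lambda>x. D i x * D i x))"
  proof (rule sum.cong[OF refl])
    fix i assume i: "i \<in> I"
    have "(\<Sum>j\<in>I. expectation (\<lambda>x. D i x * D j x)) = expectation (\<lambda>x. D i x * D i x) + 
            (\<Sum>j\<in>I - {i}. expectation (\<lambda>x. D i x * D j x))"
      using fin i by (simp add: sum.remove)
    also have "(\<Sum>j\<in>I - {i}. expectation (\<lambda>x. D i x * D j x)) = 0"
      using off i by (intro sum.neutral) auto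
    finally show "(\<Sum>j\<in>I. expectation (\<lambda>x. D i x * D j x)) = expectation (\<lambda>x. D i x * D i x)" by simp
  qed
  also have "\<dots> \<le> (\<Sum>i\<in>I. expectation (\<lambda>x. (Y i x)\<^sup>2))"
  proof (rule sum_mono)
    fix i assume i: "i \<in> I"
    have intY2: "integrable M (\<lambda>x. (Y i x)\<^sup>2)"
      by (rule integrable_const_bound[where B="C*C"]) 
         (use i bnd in \<open>auto simp: power2_eq_square intro!: AE_I2 square_le_square_of_abs_le\<close>)
    have "expectation (\<lambda>x. D i x * D i x) = expectation (\<lambda>x. (Y i x)\<^sup>2 - 2 * m i * Y i x + (m i)\<^sup>2)"
      by (simp add: D_def power2_eq_square algebra_simps)
    also have "\<dots> = expectation (\<lambda>x. (Y i x)\<^sup>2) - 2 * m i * m i + (m i)\<^sup>2"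
      using intY[OF i] intY2 by (simp add: m_def prob_space)
    also have "\<dots> \<le> expectation (\<lambda>x. (Y i x)\<^sup>2)" by (simp add: power2_eq_square)
    finally show "expectation (\<lambda>x. D i x * D i x) \<le> expectation (\<lambda>x. (Y i x)\<^sup>2)" .
  qed
  finally show ?thesis .
qed

lemma (in prob_space) truncated_block_sum_prob_le:
  fixes W :: "nat \<Rightarrow> 'a \<Rightarrow> real"
  assumes ind: "indep_vars (\<lambda>_. borel) W UNIV"
    and iid: "\<And>i. distr M borel (W i) = distr M borel (W 0)"
    and nn: "\<And>i x. x \<in> space M \<Longrightarrow> W i x \<ge> 0"
    and int: "integrable M (W 0)"
    and t: "t > 0"
  shows "prob {x \<in> space M. real ((2::nat)^m) * (expectation (W 0) + t) \<le> 
             (\<Sum>i<(2::nat)^m. (if W i x \<le> real i + 1 then W i x else 0))}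
       \<le> expectation (\<lambda>x. (if W 0 x \<le> 2^m then (W 0 x)\<^sup>2 / 2^m else 0)) / t\<^sup>2"
proof -
  have meas[measurable]: "\<And>i. W i \<in> borel_measurable M" using ind unfolding indep_vars_def by blast
  define mean where "mean = expectation (W 0)"
  have ex: "expectation (\<lambda>x. g (W i x)) = expectation (\<lambda>x. g (W 0 x))" 
    if "g \<in> borel_measurable borel" for g :: "real \<Rightarrow> real" and i
    using integral_comp_eq_of_distr_eq[OF iid[of i] meas[of i] meas[of 0] that] .
  define N where "N = (2::nat)^m"
  have rN: "real N = 2^m" unfolding N_def by simp
  have N: "real N \<ge> 1" unfolding rN by simp
  define k where "k i v = (if v \<le> real i + 1 then v else 0)" for i and v :: real
  define T where "T i x = k i (W i x)" for i x
  define H where "H x = (if W 0 x \<le> 2^m then (W 0 x)\<^sup>2 / 2^m else 0)" for x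
  define S where "S x = (\<Sum>i<N. T i x)" for x
  have [measurable]: "k i \<in> borel_measurable borel" for i unfolding k_def by measurable
  have measT[measurable]: "T i \<in> borel_measurable M" for i unfolding T_def by measurable
  have measH[measurable]: "H \<in> borel_measurable M" unfolding H_def by measurable
  have measS[measurable]: "S \<in> borel_measurable M" unfolding S_def by measurable
  have bT: "\<bar>T i x\<bar> \<le> real N" if "i < N" "x \<in> space M" for i x
  proof -
    have "real i + 1 \<le> real N" using that by linarith
    then show ?thesis using nn[OF that(2), of i] unfolding T_def k_def by auto
  qed
  have intT: "integrable M (T i)" if "i < N" for i
    by (rule integrable_bounded[OF measT bT[OF that]])
  have indT: "indep_vars (\<lambda>_. borel) T {..<N}"
    unfolding T_def by (rule indep_vars_compose2[OF indep_vars_subset[OF ind]]) auto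
  have ET: "expectation (T i) \<le> mean" for i
  proof -
    have "expectation (T i) = expectation (\<lambda>x. k i (W 0 x))" unfolding T_def by (rule ex) simp
    also have "\<dots> \<le> mean" unfolding mean_def
    proof (rule integral_mono[OF _ int])
      show "integrable M (\<lambda>x. k i (W 0 x))"
        by (rule integrable_bounded[where B="real i + 1"]) (use nn in \<open>auto simp: k_def\<close>)
      show "k i (W 0 x) \<le> W 0 x" if "x \<in> space M" for x using nn[OF that, of 0] by (auto simp: k_def)
    qed
    finally show ?thesis .
  qed
  have intH: "integrable M H"
  proof (rule integrable_bounded[OF measH])
    fix x assume x: "x \<in> space M"
    show "\<bar>H x\<bar> \<le> 2^m"
    proof (cases "W 0 x \<le> 2^m")
      case True
      have "(W 0 x)\<^sup>2 / 2^m = W 0 x * (W 0 x / 2^m)" by (simp add: power2_eq_square)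
      also have "\<dots> \<le> W 0 x * 1" using True nn[OF x, of 0] by (intro mult_left_mono) auto
      finally show ?thesis using True nn[OF x, of 0] unfolding H_def by auto
    qed (simp add: H_def)
  qed
  have ET2: "expectation (\<lambda>x. (T i x)\<^sup>2) \<le> real N * expectation H" if "i < N" for i
  proof -
    have "expectation (\<lambda>x. (T i x)\<^sup>2) = expectation (\<lambda>x. (k i (W 0 x))\<^sup>2)" unfolding T_def
      by (rule ex[of "\<lambda>v. (k i v)\<^sup>2" i]) simp
    also have "\<dots> \<le> expectation (\<lambda>x. real N * H x)"
    proof (rule integral_mono)
      show "integrable M (\<lambda>x. (k i (W 0 x))\<^sup>2)"
        by (rule integrable_bounded[where B="(real i + 1)^2"]) 
           (use nn in \<open>auto simp: k_def intro!: power_mono\<close>)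
      show "integrable M (\<lambda>x. real N * H x)" using intH by simp
      fix x assume x: "x \<in> space M"
      have "real i + 1 \<le> real N" using that by linarith
      then show "(k i (W 0 x))\<^sup>2 \<le> real N * H x"
        using nn[OF x, of 0] unfolding k_def H_def rN by auto
    qed
    also have "\<dots> = real N * expectation H" by simp
    finally show ?thesis .
  qed
  have ES: "expectation S \<le> real N * mean"
  proof -
    have "expectation S = (\<Sum>i<N. expectation (T i))"
      unfolding S_def[abs_def] using intT by (simp add: integral_sum)
    also have "\<dots> \<le> (\<Sum>i<N. mean)" by (rule sum_mono) (rule ET)
    finally show ?thesis by simp
  qed
  have var: "variance S \<le> real N * (real N * expectation H)"
  proof -
    have "variance S \<le> (\<Sum>i<N. expectation (\<lambda>x. (T i x)\<^sup>2))"
      unfolding S_def[abs_def] by (rule variance_sum_indep_le[OF _ indT]) (use bT in auto)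
    also have "\<dots> \<le> (\<Sum>i<N. real N * expectation H)" by (rule sum_mono) (use ET2 in auto)
    finally show ?thesis by simp
  qed
  have Nt: "real N * t > 0" using N t by simp
  have cheb: "prob {x\<in>space M. \<bar>S x - expectation S\<bar> \<ge> real N * t} \<le> variance S / (real N * t)\<^sup>2"
  proof (rule Chebyshev_inequality[OF measS _ Nt])
    show "integrable M (\<lambda>x. (S x)\<^sup>2)"
    proof (rule integrable_bounded[where B="(real N * real N)^2"])
      fix x assume x: "x \<in> space M"
      have "\<bar>S x\<bar> \<le> (\<Sum>i<N. real N)" unfolding S_def
        by (rule order.trans[OF sum_abs sum_mono]) (use bT x in auto)
      then have "\<bar>S x\<bar> \<le> real N * real N" by simp
      then show "\<bar>(S x)\<^sup>2\<bar> \<le> (real N * real N)\<^sup>2"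
        by (simp add: power2_eq_square square_le_square_of_abs_le)
    qed simp
  qed
  have sub: "{x \<in> space M. real N * (mean + t) \<le> S x} \<subseteq> {x\<in>space M. \<bar>S x - expectation S\<bar> \<ge> real N * t}"
    using ES by (auto simp: algebra_simps)
  have "prob {x \<in> space M. real N * (mean + t) \<le> S x} \<le> variance S / (real N * t)\<^sup>2"
    by (rule order.trans[OF finite_measure_mono[OF sub] cheb]) measurable
  also have "\<dots> \<le> real N * (real N * expectation H) / (real N * t)\<^sup>2"
    using var Nt by (intro divide_right_mono) auto
  also have "\<dots> = expectation H / t\<^sup>2" using N t by (simp add: power2_eq_square field_simps)
  finally show ?thesis unfolding S_def T_def k_def H_def mean_def N_def .
qed

lemma (in prob_space) iid_nonneg_eventually_le_index:
  fixes W :: "nat \<Rightarrow> 'a \<Rightarrow> real"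
  assumes meas[measurable]: "\<And>i. W i \<in> borel_measurable M"
    and iid: "\<And>i. distr M borel (W i) = distr M borel (W 0)"
    and nn: "\<And>i x. x \<in> space M \<Longrightarrow> W i x \<ge> 0"
    and int: "integrable M (W 0)"
  shows "AE x in M. eventually (\<lambda>i. W i x \<le> real i + 1) sequentially"
proof -
  define A where "A i = {x \<in> space M. real i + 1 < W i x}" for i
  have A_sets[measurable]: "A i \<in> sets M" for i unfolding A_def by measurable
  define g where "g i v = (if real i + 1 < v then 1 else 0::real)" for i and v :: real
  have [measurable]: "g i \<in> borel_measurable borel" for i unfolding g_def by measurable
  have intg: "integrable M (\<lambda>x. g i (W 0 x))" for i
    by (rule integrable_bounded[where B=1]) (auto simp: g_def)
  have probA: "prob (A i) = expectation (\<lambda>x. g i (W 0 x))" for i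
  proof -
    have "prob (A i) = expectation (indicator (A i))"
      using sets.sets_into_space[OF A_sets[of i]] by (simp add: Int_absorb2)
    also have "\<dots> = expectation (\<lambda>x. g i (W i x))"
      by (rule Bochner_Integration.integral_cong) (auto simp: A_def g_def indicator_def)
    also have "\<dots> = expectation (\<lambda>x. g i (W 0 x))"
      by (rule integral_comp_eq_of_distr_eq[OF iid[of i] meas[of i] meas[of 0]]) simp
    finally show ?thesis .
  qed
  have "summable (\<lambda>i. prob (A i))"
  proof (rule summableI_nonneg_bounded[where x = "expectation (W 0)"])
    fix n
    have "(\<Sum>i<n. prob (A i)) = expectation (\<lambda>x. \<Sum>i<n. g i (W 0 x))"
      using intg by (simp add: probA integral_sum)
    also have "\<dots> \<le> expectation (W 0)"
    proof (rule integral_mono[OF _ int])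
      show "integrable M (\<lambda>x. \<Sum>i<n. g i (W 0 x))" using intg by simp
      fix x assume x: "x \<in> space M"
      show "(\<Sum>i<n. g i (W 0 x)) \<le> W 0 x"
        using sum_exceedance_indicator_le[OF nn[OF x, of 0], of n] unfolding g_def by linarith
    qed
    finally show "(\<Sum>i<n. prob (A i)) \<le> expectation (W 0)" .
  qed simp
  then have "AE x in M. eventually (\<lambda>i. x \<in> space M - A i) sequentially"
    by (rule borel_cantelli_AE1[OF A_sets, rotated]) (simp add: emeasure_eq_measure)
  then show ?thesis
    by eventually_elim (auto elim: eventually_mono simp: A_def)
qed

lemma (in prob_space) truncated_dyadic_sum_eventually_less:
  fixes W :: "nat \<Rightarrow> 'a \<Rightarrow> real"
  assumes ind: "indep_vars (\<lambda>_. borel) W UNIV"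
    and iid: "\<And>i. distr M borel (W i) = distr M borel (W 0)"
    and nn: "\<And>i x. x \<in> space M \<Longrightarrow> W i x \<ge> 0"
    and int: "integrable M (W 0)"
    and t: "t > 0"
  shows "AE x in M. eventually (\<lambda>m. (\<Sum>i<(2::nat)^m. (if W i x \<le> real i + 1 then W i x else 0))
    < real ((2::nat)^m) * (expectation (W 0) + t)) sequentially"
proof -
  have [measurable]: "\<And>i. W i \<in> borel_measurable M" using ind unfolding indep_vars_def by blast
  define H where "H m x = (if W 0 x \<le> 2^m then (W 0 x)\<^sup>2 / 2^m else 0)" for m x
  define B where "B m = {x \<in> space M. real ((2::nat)^m) * (expectation (W 0) + t)
    \<le> (\<Sum>i<(2::nat)^m. (if W i x \<le> real i + 1 then W i x else 0))}" for m
  have B_sets[measurable]: "B m \<in> sets M" for m unfolding B_def by measurable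
  have [measurable]: "H m \<in> borel_measurable M" for m unfolding H_def by measurable
  have intH: "integrable M (H m)" for m
  proof (rule integrable_bounded)
    fix x assume x: "x \<in> space M"
    show "\<bar>H m x\<bar> \<le> 2^m"
    proof (cases "W 0 x \<le> 2^m")
      case True
      have "(W 0 x)\<^sup>2 / 2^m = W 0 x * (W 0 x / 2^m)" by (simp add: power2_eq_square)
      also have "\<dots> \<le> W 0 x * 1" using True nn[OF x, of 0] by (intro mult_left_mono) auto
      finally show ?thesis using True nn[OF x, of 0] unfolding H_def by auto
    qed (simp add: H_def)
  qed measurable
  have "summable (\<lambda>m. prob (B m))"
  proof (rule summableI_nonneg_bounded[where x = "2 * expectation (W 0) / t\<^sup>2"])
    fix n
    have "(\<Sum>m<n. prob (B m)) \<le> (\<Sum>m<n. expectation (H m) / t\<^sup>2)"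
      unfolding B_def H_def by (intro sum_mono truncated_block_sum_prob_le[OF ind iid nn int t])
    also have "\<dots> = expectation (\<lambda>x. \<Sum>m<n. H m x) / t\<^sup>2"
      using intH by (simp add: integral_sum sum_divide_distrib)
    also have "expectation (\<lambda>x. \<Sum>m<n. H m x) \<le> expectation (\<lambda>x. 2 * W 0 x)"
    proof (rule integral_mono)
      show "integrable M (\<lambda>x. \<Sum>m<n. H m x)" using intH by simp
      show "integrable M (\<lambda>x. 2 * W 0 x)" using int by simp
      fix x assume x: "x \<in> space M"
      show "(\<Sum>m<n. H m x) \<le> 2 * W 0 x"
        using truncated_square_sum_le[OF nn[OF x, of 0], of n] unfolding H_def .
    qed
    finally show "(\<Sum>m<n. prob (B m)) \<le> 2 * expectation (W 0) / t\<^sup>2"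
      by (simp add: divide_right_mono)
  qed simp
  then have "AE x in M. eventually (\<lambda>m. x \<in> space M - B m) sequentially"
    by (rule borel_cantelli_AE1[OF B_sets, rotated]) (simp add: emeasure_eq_measure)
  then show ?thesis
    by eventually_elim (auto elim: eventually_mono simp: B_def)
qed

lemma (in prob_space) nonneg_iid_sum_eventually_le:
  fixes W :: "nat \<Rightarrow> 'a \<Rightarrow> real"
  assumes ind: "indep_vars (\<lambda>_. borel) W UNIV"
    and iid: "\<And>i. distr M borel (W i) = distr M borel (W 0)"
    and nn: "\<And>i x. x \<in> space M \<Longrightarrow> W i x \<ge> 0"
    and int: "integrable M (W 0)"
    and t: "t > 0"
  shows "AE x in M. eventually (\<lambda>n. (\<Sum>i<n. W i x) \<le> real n * (2 * expectation (W 0) + 3 * t)) sequentially"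
proof -
  have meas: "\<And>i. W i \<in> borel_measurable M" using ind unfolding indep_vars_def by blast
  have "expectation (W 0) \<ge> 0" using nn by (intro integral_nonneg_AE AE_I2) auto
  have index: "AE x in M. eventually (\<lambda>i. W i x \<le> real i + 1) sequentially"
    by (rule iid_nonneg_eventually_le_index) (fact meas iid nn int)+
  have dyadic: "AE x in M. eventually (\<lambda>m. (\<Sum>i<(2::nat)^m. (if W i x \<le> real i + 1 then W i x else 0))
      < real ((2::nat)^m) * (expectation (W 0) + t)) sequentially"
    by (rule truncated_dyadic_sum_eventually_less[OF ind iid nn int t])
  show ?thesis
    using index dyadic AE_space
  proof eventually_elim
    case (elim x)
    have "eventually (\<lambda>n. (\<Sum>i<n. W i x) \<le> real n * (2 * (expectation (W 0) + t) + t)) sequentially"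
      using nn[OF elim(3)] \<open>expectation (W 0) \<ge> 0\<close> t
      by (intro sum_le_of_truncated_dyadic_sums_less elim(1,2)) auto
    then show ?case by (simp add: algebra_simps)
  qed
qed

lemma (in prob_space) bounded_indep_sum_eventually_le:
  fixes Z :: "nat \<Rightarrow> 'a \<Rightarrow> real"
  assumes ind: "indep_vars (\<lambda>_. borel) Z UNIV"
    and bnd: "\<And>i x. x \<in> space M \<Longrightarrow> \<bar>Z i x\<bar> \<le> K" and K: "K > 0"
    and mean: "\<And>i. expectation (Z i) = expectation (Z 0)"
    and e: "\<epsilon> > 0"
  shows "AE x in M. eventually (\<lambda>n. (\<Sum>i<n. Z i x) \<le> real n * (expectation (Z 0) + \<epsilon>)) sequentially"
proof -
  have [measurable]: "\<And>i. Z i \<in> borel_measurable M" using ind unfolding indep_vars_def by blast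
  define c where "c = \<epsilon>\<^sup>2 / (2 * K\<^sup>2)"
  have c: "c > 0" unfolding c_def using e K by simp
  define E where "E n = {x\<in>space M. (\<Sum>i<n. Z i x) \<ge> (\<Sum>i<n. expectation (Z i)) + real n * \<epsilon>}" for n
  have E_sets[measurable]: "E n \<in> sets M" for n unfolding E_def by measurable
  have probE: "prob (E n) \<le> exp (- c) ^ n" for n
  proof (cases "n = 0")
    case True then show ?thesis by simp
  next
    case False
    interpret H: Hoeffding_ineq M "{..<n}" Z "\<lambda>_. -K" "\<lambda>_. K" "\<Sum>i<n. expectation (Z i)"
    proof unfold_locales
      show "finite {..<n}" by simp
      show "indep_vars (\<lambda>_. borel) Z {..<n}" by (rule indep_vars_subset[OF ind]) simp
      fix i assume "i \<in> {..<n}"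
      show "AE x in M. Z i x \<in> {-K..K}"
      proof (intro AE_I2)
        fix x assume "x \<in> space M"
        then have "\<bar>Z i x\<bar> \<le> K" by (rule bnd)
        then show "Z i x \<in> {-K..K}" by (auto simp: abs_le_iff)
      qed
    qed
    have pos: "(\<Sum>i<n. (K - - K)\<^sup>2) > 0" using False K by simp
    have "prob (E n) \<le> exp (-2 * (real n * \<epsilon>)\<^sup>2 / (\<Sum>i<n. (K - - K)\<^sup>2))"
      unfolding E_def by (rule H.Hoeffding_ineq_ge) (use e pos in auto)
    also have "-2 * (real n * \<epsilon>)\<^sup>2 / (\<Sum>i<n. (K - - K)\<^sup>2) = - c * real n"
      using False K unfolding c_def by (simp add: power2_eq_square field_simps)
    also have "exp (- c * real n) = exp (- c) ^ n" by (simp add: exp_of_nat_mult[symmetric] mult.commute)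
    finally show ?thesis .
  qed
  have sumE: "summable (\<lambda>n. prob (E n))"
  proof (rule summable_comparison_test[OF _ summable_geometric[of "exp (-c)"]])
    show "norm (exp (-c)) < 1" using c by simp
    show "\<exists>N. \<forall>n\<ge>N. norm (prob (E n)) \<le> exp (- c) ^ n" using probE by simp
  qed
  have sm: "(\<Sum>i<n. expectation (Z i)) = real n * expectation (Z 0)" for n
  proof -
    have "(\<Sum>i<n. expectation (Z i)) = (\<Sum>i<n. expectation (Z 0))" by (rule sum.cong[OF refl]) (rule mean)
    then show ?thesis by simp
  qed
  have "AE x in M. eventually (\<lambda>n. x \<in> space M - E n) sequentially"
    by (rule borel_cantelli_AE1[OF E_sets _ sumE]) (simp add: emeasure_eq_measure)
  then show ?thesis
  proof eventually_elim
    case (elim x)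
    then show ?case 
    proof (rule eventually_mono)
      fix n assume "x \<in> space M - E n"
      then have "\<not> (\<Sum>i<n. Z i x) \<ge> real n * expectation (Z 0) + real n * \<epsilon>" 
        unfolding E_def sm by auto
      then show "(\<Sum>i<n. Z i x) \<le> real n * (expectation (Z 0) + \<epsilon>)" by (simp add: ring_distribs)
    qed
  qed
qed

lemma (in prob_space) iid_sum_eventually_le:
  fixes Y :: "nat \<Rightarrow> 'a \<Rightarrow> real"
  assumes ind: "indep_vars (\<lambda>_. borel) Y UNIV"
    and iid: "\<And>i. distr M borel (Y i) = distr M borel (Y 0)"
    and int: "integrable M (Y 0)" and \<delta>: "\<delta> > 0"
  shows "AE x in M. eventually (\<lambda>n. (\<Sum>i<n. Y i x) \<le> real n * (expectation (Y 0) + \<delta>)) sequentially"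
proof -
  have meas[measurable]: "\<And>i. Y i \<in> borel_measurable M" using ind unfolding indep_vars_def by blast
  \<comment> \<open>Truncating at a level K with tail mean below \<eta>, the bounded part costs \<open>2\<eta>\<close> and the
    nonnegative excess over K costs \<open>2\<eta> + 3\<eta>\<close>.\<close>
  define \<eta> where "\<eta> = \<delta> / 7"
  have \<eta>: "\<eta> > 0" using \<delta> by (simp add: \<eta>_def)
  define r where "r k x = max 0 (\<bar>Y 0 x\<bar> - real k)" for k x
  have [measurable]: "r k \<in> borel_measurable M" for k unfolding r_def by measurable
  have intr: "integrable M (r k)" for k
    by (rule Bochner_Integration.integrable_bound[OF integrable_abs[OF int]]) (auto simp: r_def)
  have "(\<lambda>k. expectation (r k)) \<longlonglongrightarrow> expectation (\<lambda>x. 0)"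
  proof (rule integral_dominated_convergence[where w="\<lambda>x. \<bar>Y 0 x\<bar>"])
    show "integrable M (\<lambda>x. \<bar>Y 0 x\<bar>)" using int by simp
    show "AE x in M. (\<lambda>k. r k x) \<longlonglongrightarrow> 0"
    proof (intro AE_I2)
      fix x
      obtain N :: nat where "\<bar>Y 0 x\<bar> \<le> real N" using real_arch_simple by blast
      then have "eventually (\<lambda>k. r k x = 0) sequentially"
        unfolding eventually_sequentially r_def by (intro exI[of _ N]) auto
      then show "(\<lambda>k. r k x) \<longlonglongrightarrow> 0" by (rule tendsto_eventually)
    qed
    show "AE x in M. norm (r k x) \<le> \<bar>Y 0 x\<bar>" for k by (intro AE_I2) (auto simp: r_def)
  qed auto
  then have "eventually (\<lambda>k. expectation (r k) < \<eta>) sequentially"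
    using \<eta> by (simp add: order_tendstoD(2))
  then obtain k where k: "expectation (r k) < \<eta>" unfolding eventually_sequentially by auto
  define K where "K = real k + 1"
  have K: "K > 0" unfolding K_def by simp
  define Z where "Z i x = max (-K) (min (Y i x) K)" for i x
  define W where "W i x = max 0 (Y i x - K)" for i x
  have measZ[measurable]: "Z i \<in> borel_measurable M" for i unfolding Z_def by measurable
  have [measurable]: "W i \<in> borel_measurable M" for i unfolding W_def by measurable
  have indZ: "indep_vars (\<lambda>_. borel) Z UNIV"
    unfolding Z_def[abs_def] by (rule indep_vars_compose2[OF ind]) auto
  have indW: "indep_vars (\<lambda>_. borel) W UNIV"
    unfolding W_def[abs_def] by (rule indep_vars_compose2[OF ind]) auto
  have iidW: "distr M borel (W i) = distr M borel (W 0)" for i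
  proof -
    have g: "(\<lambda>v::real. max 0 (v - K)) \<in> borel_measurable borel" by measurable
    have "distr M borel (W i) = distr (distr M borel (Y i)) borel (\<lambda>v. max 0 (v - K))"
      by (subst distr_distr[OF g meas]) (simp add: W_def[abs_def] comp_def)
    also have "\<dots> = distr (distr M borel (Y 0)) borel (\<lambda>v. max 0 (v - K))" by (simp add: iid[of i])
    also have "\<dots> = distr M borel (W 0)"
      by (subst distr_distr[OF g meas]) (simp add: W_def[abs_def] comp_def)
    finally show ?thesis .
  qed
  have meanZ: "expectation (Z i) = expectation (Z 0)" for i
  proof -
    have g: "(\<lambda>v::real. max (-K) (min v K)) \<in> borel_measurable borel" by measurable
    show ?thesis using integral_comp_eq_of_distr_eq[OF iid[of i] meas[of i] meas[of 0] g] by (simp add: Z_def[abs_def])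
  qed
  have bZ: "\<bar>Z i x\<bar> \<le> K" for i x using K by (auto simp: Z_def)
  have Wnn: "W i x \<ge> 0" for i x by (simp add: W_def)
  have intW: "integrable M (W 0)"
    by (rule Bochner_Integration.integrable_bound[OF int]) (use K in \<open>auto simp: W_def intro!: AE_I2\<close>)
  have intZ: "integrable M (Z 0)" by (rule integrable_bounded[OF measZ bZ])
  have EW: "expectation (W 0) \<le> \<eta>"
  proof -
    have "expectation (W 0) \<le> expectation (r k)"
      by (rule integral_mono[OF intW intr]) (auto simp: W_def r_def K_def)
    then show ?thesis using k by simp
  qed
  have EZ: "expectation (Z 0) \<le> expectation (Y 0) + \<eta>"
  proof -
    have "expectation (Z 0) \<le> expectation (\<lambda>x. Y 0 x + r k x)"
      by (rule integral_mono[OF intZ]) (use int intr in \<open>auto simp: Z_def r_def K_def\<close>)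
    also have "\<dots> = expectation (Y 0) + expectation (r k)" using int intr by simp
    finally show ?thesis using k by simp
  qed
  have AEZ: "AE x in M. eventually (\<lambda>n. (\<Sum>i<n. Z i x) \<le> real n * (expectation (Z 0) + \<eta>)) sequentially"
    by (rule bounded_indep_sum_eventually_le[OF indZ _ K meanZ \<eta>]) (rule bZ)
  have AEW: "AE x in M. eventually (\<lambda>n. (\<Sum>i<n. W i x) \<le> real n * (2 * expectation (W 0) + 3 * \<eta>)) sequentially"
    by (rule nonneg_iid_sum_eventually_le[OF indW iidW _ intW \<eta>]) (rule Wnn)
  from AEZ AEW show ?thesis
  proof eventually_elim
    case (elim x)
    from elim(1,2) show ?case
    proof eventually_elim
      case (elim n)
      have YZW: "Y i x \<le> Z i x + W i x" for i by (auto simp: Z_def W_def)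
      have "(\<Sum>i<n. Y i x) \<le> (\<Sum>i<n. Z i x) + (\<Sum>i<n. W i x)"
        by (simp add: sum.distrib[symmetric] sum_mono YZW)
      also have "\<dots> \<le> real n * (expectation (Z 0) + \<eta>) + real n * (2 * expectation (W 0) + 3 * \<eta>)"
        using elim by (rule add_mono)
      also have "\<dots> = real n * ((expectation (Z 0) + \<eta>) + (2 * expectation (W 0) + 3 * \<eta>))"
        by (simp add: ring_distribs)
      also have "\<dots> \<le> real n * (expectation (Y 0) + \<delta>)"
        by (rule mult_left_mono) (use EZ EW in \<open>auto simp: \<eta>_def\<close>)
      finally show ?case .
    qed
  qed
qed

lemma (in prob_space) AE_eventually_less_power:
  fixes Z :: "nat \<Rightarrow> 'a \<Rightarrow> ennreal"
  assumes [measurable]: "\<And>n. Z n \<in> borel_measurable M"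
    and bound: "\<And>n. (\<integral>\<^sup>+\<omega>. Z n \<omega> \<partial>M) \<le> ennreal (q ^ n)"
    and q: "0 \<le> q" "q < s"
  shows "AE \<omega> in M. eventually (\<lambda>n. Z n \<omega> < ennreal (s ^ n)) sequentially"
proof -
  have s: "0 < s" using q by simp
  define E where "E n = {\<omega> \<in> space M. 1 \<le> ennreal (1 / s ^ n) * Z n \<omega>}" for n
  have [measurable]: "E n \<in> sets M" for n unfolding E_def by measurable
  have measure_E: "measure M (E n) \<le> (q / s) ^ n" for n
  proof -
    have "emeasure M (E n) \<le> ennreal (1 / s ^ n) * (\<integral>\<^sup>+\<omega>. Z n \<omega> * indicator (space M) \<omega> \<partial>M)"
      unfolding E_def by (rule nn_integral_Markov_inequality) auto
    also have "(\<integral>\<^sup>+\<omega>. Z n \<omega> * indicator (space M) \<omega> \<partial>M) = (\<integral>\<^sup>+\<omega>. Z n \<omega> \<partial>M)"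
      by (rule nn_integral_cong) simp
    also have "ennreal (1 / s ^ n) * \<dots> \<le> ennreal (1 / s ^ n) * ennreal (q ^ n)"
      using bound[of n] by (rule mult_left_mono) simp
    also have "\<dots> = ennreal ((q / s) ^ n)"
      using q s by (simp add: ennreal_mult[symmetric] power_divide)
    finally show ?thesis using q s by (simp add: emeasure_eq_measure)
  qed
  have below: "z < ennreal (s ^ n)" if "\<not> 1 \<le> ennreal (1 / s ^ n) * z" for z n
  proof (rule ccontr)
    assume "\<not> z < ennreal (s ^ n)"
    then have "ennreal (1 / s ^ n) * ennreal (s ^ n) \<le> ennreal (1 / s ^ n) * z"
      by (intro mult_left_mono) auto
    then show False using that s by (simp add: ennreal_mult[symmetric])
  qed
  have "summable (\<lambda>n. measure M (E n))"
    using q s measure_E by (intro summable_comparison_test[OF _ summable_geometric[of "q / s"]]) auto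
  then have "AE \<omega> in M. eventually (\<lambda>n. \<omega> \<in> space M - E n) sequentially"
    by (intro borel_cantelli_AE1) (auto simp: emeasure_eq_measure)
  then show ?thesis
    by eventually_elim (auto elim!: eventually_mono intro: below simp: E_def)
qed

section \<open>Hellinger affinity and Kullback--Leibler divergence\<close>

lemma sqrt_diff_square_add_affinity:
  fixes a b :: real assumes "a \<ge> 0" "b \<ge> 0"
  shows "(sqrt a - sqrt b)\<^sup>2 + 2 * (b * sqrt (a / b)) = a + b"
proof (cases "b = 0")
  case False
  have sb: "sqrt b * sqrt b = b" using assms by simp
  have "b * sqrt (a / b) = (sqrt b * sqrt b) * (sqrt a / sqrt b)" using sb by (simp add: real_sqrt_divide)
  also have "\<dots> = sqrt a * sqrt b" using False assms by (simp add: field_simps)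
  finally show ?thesis using assms by (simp add: power2_eq_square algebra_simps)
qed (use assms in simp)

lemma hellinger_affinity:
  assumes [measurable]: "f \<in> borel_measurable \<mu>" "g \<in> borel_measurable \<mu>"
    and nonneg: "\<And>x. x \<in> space \<mu> \<Longrightarrow> f x \<ge> 0" "\<And>x. x \<in> space \<mu> \<Longrightarrow> g x \<ge> 0"
    and dens: "(\<integral>\<^sup>+x. ennreal (f x) \<partial>\<mu>) = 1" "(\<integral>\<^sup>+x. ennreal (g x) \<partial>\<mu>) = 1"
  shows "(\<integral>\<^sup>+x. ennreal (g x * sqrt (f x / g x)) \<partial>\<mu>) = ennreal (1 - (hellinger_dist \<mu> f g)\<^sup>2 / 2)"
    and "(hellinger_dist \<mu> f g)\<^sup>2 \<le> 2"
proof -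
  define a where "a = (\<integral>\<^sup>+x. ennreal ((sqrt (f x) - sqrt (g x))\<^sup>2) \<partial>\<mu>)"
  define r where "r = (\<integral>\<^sup>+x. ennreal (g x * sqrt (f x / g x)) \<partial>\<mu>)"
  have "a + 2 * r = (\<integral>\<^sup>+x. ennreal ((sqrt (f x) - sqrt (g x))\<^sup>2) + 2 * ennreal (g x * sqrt (f x / g x)) \<partial>\<mu>)"
    unfolding a_def r_def by (simp add: nn_integral_add nn_integral_cmult)
  also have "\<dots> = (\<integral>\<^sup>+x. ennreal (f x) + ennreal (g x) \<partial>\<mu>)"
  proof (rule nn_integral_cong)
    fix x assume "x \<in> space \<mu>"
    then have "f x \<ge> 0" "g x \<ge> 0" using nonneg by auto
    then have "ennreal ((sqrt (f x) - sqrt (g x))\<^sup>2) + 2 * ennreal (g x * sqrt (f x / g x))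
        = ennreal ((sqrt (f x) - sqrt (g x))\<^sup>2 + 2 * (g x * sqrt (f x / g x)))"
      by (simp add: ennreal_plus ennreal_mult)
    also have "\<dots> = ennreal (f x) + ennreal (g x)"
      using \<open>f x \<ge> 0\<close> \<open>g x \<ge> 0\<close> by (simp add: sqrt_diff_square_add_affinity)
    finally show "ennreal ((sqrt (f x) - sqrt (g x))\<^sup>2) + 2 * ennreal (g x * sqrt (f x / g x))
        = ennreal (f x) + ennreal (g x)" .
  qed
  also have "\<dots> = 2" using dens by (simp add: nn_integral_add one_add_one)
  finally have sum: "a + 2 * r = 2" .
  then have "a \<noteq> \<infinity>" "r \<noteq> \<infinity>" by (auto simp: ennreal_mult_eq_top_iff)
  then obtain a' r' where a': "a = ennreal a'" "a' \<ge> 0" and r': "r = ennreal r'" "r' \<ge> 0"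
    by (cases a; cases r) auto
  have "ennreal (a' + 2 * r') = ennreal 2" using sum a' r' by (simp add: ennreal_plus ennreal_mult)
  then have "a' + 2 * r' = 2" using a' r' by (subst (asm) ennreal_inj) auto
  moreover have "(hellinger_dist \<mu> f g)\<^sup>2 = a'" using a' unfolding hellinger_dist_def a_def by simp
  ultimately show "r = ennreal (1 - (hellinger_dist \<mu> f g)\<^sup>2 / 2)" "(hellinger_dist \<mu> f g)\<^sup>2 \<le> 2"
    using r' by auto
qed

definition log_ratio :: "('b \<Rightarrow> real) \<Rightarrow> ('b \<Rightarrow> real) \<Rightarrow> 'b \<Rightarrow> real" where
  "log_ratio f g x = (if 0 < f x \<and> 0 < g x then ln (f x / g x) else 0)"

lemma prod_ratio_eq_exp_neg_sum_log_ratio: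
  assumes "\<And>i. i \<in> I \<Longrightarrow> 0 < f (x i)" "\<And>i. i \<in> I \<Longrightarrow> 0 < g (x i)"
  shows "(\<Prod>i\<in>I. g (x i) / f (x i)) = exp (- (\<Sum>i\<in>I. log_ratio f g (x i)))"
proof -
  have "g (x i) / f (x i) = exp (- log_ratio f g (x i))" if "i \<in> I" for i
    using assms[OF that] by (simp add: log_ratio_def ln_div exp_diff)
  then have "(\<Prod>i\<in>I. g (x i) / f (x i)) = (\<Prod>i\<in>I. exp (- log_ratio f g (x i)))"
    by (rule prod.cong[OF refl])
  then show ?thesis
    by (cases "finite I") (simp_all add: exp_sum flip: sum_negf)
qed

lemma exp_neg_le_prod_ratio:
  assumes "\<And>i. 0 < f (x i) \<longrightarrow> 0 < g (x i)" "\<And>i. 0 < f (x i)"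
    and "(\<Sum>i<n. log_ratio f g (x i)) \<le> real n * a"
  shows "exp (- a * real n) \<le> (\<Prod>i<n. g (x i) / f (x i))"
proof -
  have "(\<Prod>i<n. g (x i) / f (x i)) = exp (- (\<Sum>i<n. log_ratio f g (x i)))"
    using assms(1,2) by (intro prod_ratio_eq_exp_neg_sum_log_ratio) auto
  then show ?thesis using assms(3) by (simp add: algebra_simps)
qed

lemma kl_neg_le: "kl_neg f g x \<le> ennreal (g x)"
proof (cases "0 < f x \<and> 0 < g x")
  case True
  have "f x * ln (g x / f x) \<le> f x * (g x / f x - 1)"
    using True by (intro mult_left_mono ln_le_minus_one) auto
  also have "\<dots> \<le> g x" using True by (simp add: field_simps)
  finally show ?thesis using True by (simp add: kl_neg_def ln_div ennreal_leI algebra_simps)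
qed (auto simp: kl_neg_def)

lemma kl_div_lessD:
  assumes [measurable]: "f \<in> borel_measurable \<mu>" "g \<in> borel_measurable \<mu>"
    and nonneg: "\<And>x. x \<in> space \<mu> \<Longrightarrow> f x \<ge> 0" "\<And>x. x \<in> space \<mu> \<Longrightarrow> g x \<ge> 0"
    and dens: "(\<integral>\<^sup>+x. ennreal (g x) \<partial>\<mu>) = 1"
    and kl: "kl_div \<mu> f g < ereal \<epsilon>"
  shows "AE x in \<mu>. 0 < f x \<longrightarrow> 0 < g x"
    and "integrable \<mu> (\<lambda>x. f x * log_ratio f g x)"
    and "(\<integral>x. f x * log_ratio f g x \<partial>\<mu>) < \<epsilon>"
proof -
  define pos where "pos = (\<integral>\<^sup>+x. kl_pos f g x \<partial>\<mu>)"
  define neg where "neg = (\<integral>\<^sup>+x. kl_neg f g x \<partial>\<mu>)"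
  have [measurable]: "kl_pos f g \<in> borel_measurable \<mu>" "kl_neg f g \<in> borel_measurable \<mu>"
    unfolding kl_pos_def kl_neg_def by measurable
  have "neg \<le> 1" unfolding neg_def dens[symmetric] by (rule nn_integral_mono) (rule kl_neg_le)
  then have "neg \<noteq> \<infinity>" by (auto simp: top_unique)
  then obtain n' where n': "neg = ennreal n'" "n' \<ge> 0" by (cases neg) auto
  have kl': "enn2ereal pos - enn2ereal neg < ereal \<epsilon>"
    using kl unfolding kl_div_def pos_def neg_def .
  then have "pos \<noteq> \<infinity>" using n' by auto
  then obtain p' where p': "pos = ennreal p'" "p' \<ge> 0" by (cases pos) auto
  have "AE x in \<mu>. kl_pos f g x \<noteq> \<infinity>"
    by (rule nn_integral_PInf_AE) (use p' in \<open>auto simp: pos_def\<close>)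
  then show support: "AE x in \<mu>. 0 < f x \<longrightarrow> 0 < g x"
    using AE_space by eventually_elim (use nonneg in \<open>fastforce simp: kl_pos_def less_le\<close>)
  define F where "F x = f x * log_ratio f g x" for x
  have [measurable]: "F \<in> borel_measurable \<mu>" unfolding F_def log_ratio_def by measurable
  have "AE x in \<mu>. ennreal (F x) = kl_pos f g x \<and> ennreal (- F x) = kl_neg f g x"
    using support AE_space
    by eventually_elim (use nonneg in \<open>auto simp: F_def log_ratio_def kl_pos_def kl_neg_def less_le\<close>)
  then have ipos: "(\<integral>\<^sup>+x. ennreal (F x) \<partial>\<mu>) = pos" and ineg: "(\<integral>\<^sup>+x. ennreal (- F x) \<partial>\<mu>) = neg"
    unfolding pos_def neg_def by (auto intro!: nn_integral_cong_AE elim!: eventually_mono)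
  show int: "integrable \<mu> (\<lambda>x. f x * log_ratio f g x)"
    unfolding F_def[symmetric] real_integrable_def using ipos ineg p' n' by simp
  have "(\<integral>x. f x * log_ratio f g x \<partial>\<mu>) = p' - n'"
    using real_lebesgue_integral_def[OF int] ipos ineg p' n' unfolding F_def by simp
  then show "(\<integral>x. f x * log_ratio f g x \<partial>\<mu>) < \<epsilon>" using kl' p' n' by simp
qed

section \<open>Integrated likelihood ratios\<close>

lemma marginal_lik_eq_ratio:
  assumes pos: "\<And>i. 0 < h (x i)"
    and [measurable]: "\<And>i. (\<lambda>\<theta>. f \<theta> (x i)) \<in> borel_measurable P"
  shows "marginal_lik P f x n
    = ennreal (\<Prod>i<n. h (x i)) * (\<integral>\<^sup>+\<theta>. ennreal (\<Prod>i<n. f \<theta> (x i) / h (x i)) \<partial>P)"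
proof -
  have "(\<Prod>i<n. f \<theta> (x i)) = (\<Prod>i<n. h (x i)) * (\<Prod>i<n. f \<theta> (x i) / h (x i))" for \<theta>
    using pos by (simp add: prod.distrib[symmetric] less_imp_neq[symmetric])
  then show ?thesis
    unfolding marginal_lik_def
    using pos by (simp add: ennreal_mult' prod_nonneg less_imp_le nn_integral_cmult)
qed

lemma bayes_factor_le:
  assumes pos: "\<And>i. 0 < f0 (x i)"
    and [measurable]: "\<And>i. (\<lambda>\<theta>. f1 \<theta> (x i)) \<in> borel_measurable P1"
      "\<And>i. (\<lambda>\<theta>. f2 \<theta> (x i)) \<in> borel_measurable P2"
    and num: "(\<integral>\<^sup>+\<theta>. ennreal (\<Prod>i<n. f1 \<theta> (x i) / f0 (x i)) \<partial>P1) \<le> ennreal a"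
    and den: "ennreal b \<le> (\<integral>\<^sup>+\<theta>. ennreal (\<Prod>i<n. f2 \<theta> (x i) / f0 (x i)) \<partial>P2)"
    and "0 \<le> a" "0 < b"
  shows "bayes_factor P1 f1 P2 f2 x n \<le> ennreal (a / b)"
proof -
  define L where "L = ennreal (\<Prod>i<n. f0 (x i))"
  have ml1: "marginal_lik P1 f1 x n = L * (\<integral>\<^sup>+\<theta>. ennreal (\<Prod>i<n. f1 \<theta> (x i) / f0 (x i)) \<partial>P1)"
    unfolding L_def by (intro marginal_lik_eq_ratio pos) measurable
  have ml2: "marginal_lik P2 f2 x n = L * (\<integral>\<^sup>+\<theta>. ennreal (\<Prod>i<n. f2 \<theta> (x i) / f0 (x i)) \<partial>P2)"
    unfolding L_def by (intro marginal_lik_eq_ratio pos) measurable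
  have L: "0 < L" unfolding L_def using pos by (simp add: prod_pos)
  have "L * ennreal b > 0" using L \<open>0 < b\<close> by (simp add: ennreal_zero_less_mult_iff)
  also have "L * ennreal b \<le> marginal_lik P2 f2 x n"
    unfolding ml2 using den by (rule mult_left_mono) simp
  finally have den_pos: "0 < marginal_lik P2 f2 x n" .
  have "marginal_lik P1 f1 x n \<le> L * ennreal a"
    unfolding ml1 using num by (rule mult_left_mono) simp
  also have "\<dots> = (L * ennreal b) * ennreal (a / b)"
    using \<open>0 \<le> a\<close> \<open>0 < b\<close> by (simp add: mult.assoc ennreal_mult[symmetric])
  also have "\<dots> \<le> marginal_lik P2 f2 x n * ennreal (a / b)"
    unfolding ml2 using den by (intro mult_right_mono mult_left_mono) simp_all
  finally show ?thesis
    unfolding bayes_factor_def by (rule divide_le_posI_ennreal[OF den_pos])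
qed

lemma (in finite_measure) nn_integral_eventually_ge_exp:
  fixes g :: "nat \<Rightarrow> 'a \<Rightarrow> ennreal"
  assumes [measurable]: "A \<in> sets M" "\<And>n. g n \<in> borel_measurable M"
    and A: "emeasure M A > 0"
    and lower: "AE \<theta> in M. \<theta> \<in> A \<longrightarrow> (\<exists>N. \<forall>n\<ge>N. ennreal (exp (- a * real n)) \<le> g n \<theta>)"
    and "a < b"
  shows "eventually (\<lambda>n. ennreal (exp (- b * real n)) \<le> (\<integral>\<^sup>+\<theta>. g n \<theta> \<partial>M)) sequentially"
proof -
  define G where "G N = {\<theta> \<in> A. \<forall>n\<ge>N. ennreal (exp (- a * real n)) \<le> g n \<theta>}" for N
  have [measurable]: "G N \<in> sets M" for N unfolding G_def by measurable
  obtain N where "emeasure M (G N) > 0"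
  proof (rule ccontr)
    assume "\<not> thesis"
    then have "emeasure M (\<Union>N. G N) = 0"
      using that by (intro emeasure_UN_eq_0) (auto simp: zero_less_iff_neq_zero)
    moreover have "emeasure M A \<le> emeasure M (\<Union>N. G N)"
      by (rule emeasure_mono_AE) (use lower in \<open>auto simp: G_def elim!: eventually_mono\<close>)
    ultimately show False using A by simp
  qed
  then have p: "measure M (G N) > 0" by (simp add: emeasure_eq_measure)
  have "eventually (\<lambda>n. exp (- (b - a) * real n) < measure M (G N)) sequentially"
    using exp_neg_mult_LIMSEQ_zero[of "b - a"] p \<open>a < b\<close> by (simp add: order_tendstoD(2))
  then show ?thesis using eventually_ge_at_top[of N]
  proof eventually_elim
    case (elim n)
    have "exp (- b * real n) = exp (- a * real n) * exp (- (b - a) * real n)"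
      by (simp add: exp_add[symmetric] algebra_simps)
    also have "\<dots> \<le> exp (- a * real n) * measure M (G N)"
      using elim(1) by (intro mult_left_mono) auto
    finally have "ennreal (exp (- b * real n)) \<le> ennreal (exp (- a * real n) * measure M (G N))"
      by (rule ennreal_leI)
    also have "\<dots> = ennreal (exp (- a * real n)) * emeasure M (G N)"
      by (simp add: emeasure_eq_measure ennreal_mult)
    also have "\<dots> = (\<integral>\<^sup>+\<theta>. ennreal (exp (- a * real n)) * indicator (G N) \<theta> \<partial>M)"
      by (simp add: nn_integral_cmult_indicator)
    also have "\<dots> \<le> (\<integral>\<^sup>+\<theta>. g n \<theta> \<partial>M)"
      by (rule nn_integral_mono) (use elim(2) in \<open>auto simp: G_def split: split_indicator\<close>)
    finally show ?case .
  qed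
qed

lemma nn_integral_le_exp_mult_sqrt:
  fixes R :: "'a \<Rightarrow> real"
  assumes [measurable]: "R \<in> borel_measurable P"
    and nonneg: "\<And>\<theta>. \<theta> \<in> space P \<Longrightarrow> 0 \<le> R \<theta>"
    and sup: "(SUP \<theta>\<in>space P. ennreal (R \<theta>)) < ennreal (exp (2 * a))"
  shows "(\<integral>\<^sup>+\<theta>. ennreal (R \<theta>) \<partial>P) \<le> ennreal (exp a) * (\<integral>\<^sup>+\<theta>. ennreal (sqrt (R \<theta>)) \<partial>P)"
proof -
  have "ennreal (R \<theta>) \<le> ennreal (exp a) * ennreal (sqrt (R \<theta>))" if \<theta>: "\<theta> \<in> space P" for \<theta>
  proof -
    have "ennreal (R \<theta>) < ennreal (exp (2 * a))"
      using SUP_upper[OF \<theta>, of "\<lambda>\<theta>. ennreal (R \<theta>)"] sup by (rule le_less_trans)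
    then have "R \<theta> \<le> (exp a)\<^sup>2"
      using nonneg[OF \<theta>] exp_of_nat_mult[of 2 a] by (simp add: ennreal_less_iff)
    then have "sqrt (R \<theta>) \<le> exp a"
      using real_sqrt_le_mono[of "R \<theta>" "(exp a)\<^sup>2"] by simp
    then have "sqrt (R \<theta>) * sqrt (R \<theta>) \<le> exp a * sqrt (R \<theta>)"
      by (intro mult_right_mono) (simp_all add: nonneg[OF \<theta>])
    then show ?thesis
      using nonneg[OF \<theta>] by (simp add: ennreal_mult[symmetric] ennreal_leI)
  qed
  then have "(\<integral>\<^sup>+\<theta>. ennreal (R \<theta>) \<partial>P) \<le> (\<integral>\<^sup>+\<theta>. ennreal (exp a) * ennreal (sqrt (R \<theta>)) \<partial>P)"
    by (rule nn_integral_mono)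
  also have "\<dots> = ennreal (exp a) * (\<integral>\<^sup>+\<theta>. ennreal (sqrt (R \<theta>)) \<partial>P)"
    by (rule nn_integral_cmult) measurable
  finally show ?thesis .
qed

section \<open>Independent samples from a density\<close>

locale iid_sample = prob_space M
  for M :: "'w measure" +
  fixes \<mu> :: "'b measure" and X :: "nat \<Rightarrow> 'w \<Rightarrow> 'b" and f0 :: "'b \<Rightarrow> real"
  assumes f0_measurable[measurable]: "f0 \<in> borel_measurable \<mu>"
    and f0_nonneg: "\<And>x. x \<in> space \<mu> \<Longrightarrow> f0 x \<ge> 0"
    and indep: "indep_vars (\<lambda>_. \<mu>) X UNIV"
    and distributed: "\<And>i. distributed M \<mu> (X i) (\<lambda>x. ennreal (f0 x))"
begin

lemma X_measurable[measurable]: "X i \<in> measurable M \<mu>"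
  using distributed[of i] by (rule distributed_measurable)

lemma X_in_space: "\<omega> \<in> space M \<Longrightarrow> X i \<omega> \<in> space \<mu>"
  using measurable_space[OF X_measurable] by blast

lemma f0_integral_eq_1: "(\<integral>\<^sup>+x. ennreal (f0 x) \<partial>\<mu>) = 1"
proof -
  have "emeasure M (X 0 -` space \<mu> \<inter> space M) = (\<integral>\<^sup>+x. ennreal (f0 x) * indicator (space \<mu>) x \<partial>\<mu>)"
    by (rule distributed_emeasure[OF distributed]) simp
  also have "X 0 -` space \<mu> \<inter> space M = space M" using X_in_space by auto
  also have "(\<integral>\<^sup>+x. ennreal (f0 x) * indicator (space \<mu>) x \<partial>\<mu>) = (\<integral>\<^sup>+x. ennreal (f0 x) \<partial>\<mu>)"
    by (rule nn_integral_cong) simp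
  finally show ?thesis by (simp add: emeasure_space_1)
qed

lemma AE_sample:
  assumes "AE x in \<mu>. 0 < f0 x \<longrightarrow> P x" and [measurable]: "{x \<in> space \<mu>. P x} \<in> sets \<mu>"
  shows "AE \<omega> in M. P (X i \<omega>)"
proof -
  have "AE x in density \<mu> (\<lambda>x. ennreal (f0 x)). P x"
    using assms(1) by (subst AE_density) (auto elim!: eventually_mono)
  then have "AE x in distr M \<mu> (X i). P x"
    unfolding distributed_distr_eq_density[OF distributed[of i]] .
  then show ?thesis by (subst (asm) AE_distr_iff) auto
qed

lemma AE_sample_pos: "AE \<omega> in M. \<forall>i. 0 < f0 (X i \<omega>)"
  unfolding AE_all_countable by (intro allI AE_sample AE_I2) auto

lemma sample_sum_eventually_le:
  assumes [measurable]: "g \<in> borel_measurable \<mu>"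
    and int: "integrable \<mu> (\<lambda>x. f0 x * g x)" and "\<delta> > 0"
  shows "AE \<omega> in M. eventually (\<lambda>n. (\<Sum>i<n. g (X i \<omega>)) \<le> real n * ((\<integral>x. f0 x * g x \<partial>\<mu>) + \<delta>)) sequentially"
proof -
  define Y where "Y i \<omega> = g (X i \<omega>)" for i \<omega>
  have "indep_vars (\<lambda>_. borel) Y UNIV"
    unfolding Y_def by (rule indep_vars_compose2[OF indep]) auto
  moreover have "distr M borel (Y i) = distr (density \<mu> (\<lambda>x. ennreal (f0 x))) borel g" for i
  proof -
    have "distr M borel (Y i) = distr (distr M \<mu> (X i)) borel g"
      by (subst distr_distr) (auto simp: Y_def[abs_def] comp_def)
    then show ?thesis by (simp add: distributed_distr_eq_density[OF distributed[of i]])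
  qed
  moreover have "integrable M (Y 0)"
  proof -
    have "integrable (density \<mu> (\<lambda>x. ennreal (f0 x))) g"
      by (subst integrable_density) (use int f0_nonneg in \<open>auto intro!: AE_I2\<close>)
    then show ?thesis
      unfolding Y_def by (subst integrable_distr_eq[symmetric])
        (auto simp flip: distributed_distr_eq_density[OF distributed[of 0]])
  qed
  moreover have "expectation (Y 0) = (\<integral>x. f0 x * g x \<partial>\<mu>)"
    unfolding Y_def by (rule distributed_integral[OF distributed, symmetric]) (auto simp: f0_nonneg)
  ultimately show ?thesis
    using iid_sum_eventually_le[of Y \<delta>] \<open>\<delta> > 0\<close> by (simp add: Y_def)
qed

lemma measurable_kernel_sample:
  assumes "(\<lambda>(\<theta>, x). f \<theta> x) \<in> borel_measurable (P \<Otimes>\<^sub>M \<mu>)"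
  shows "(\<lambda>p. f (snd p) (X i (fst p))) \<in> borel_measurable (M \<Otimes>\<^sub>M P)"
proof -
  have "(\<lambda>p. (snd p, X i (fst p))) \<in> measurable (M \<Otimes>\<^sub>M P) (P \<Otimes>\<^sub>M \<mu>)" by measurable
  from measurable_compose[OF this assms] show ?thesis by simp
qed

lemma measurable_kernel_at_sample:
  assumes "(\<lambda>(\<theta>, x). f \<theta> x) \<in> borel_measurable (P \<Otimes>\<^sub>M \<mu>)" and "\<omega> \<in> space M"
  shows "(\<lambda>\<theta>. f \<theta> (X i \<omega>)) \<in> borel_measurable P"
  using measurable_Pair1[OF assms(1) X_in_space[OF assms(2)]] by simp

lemma sqrt_ratio_expectation_le:
  fixes P :: "'p measure" and f :: "'p \<Rightarrow> 'b \<Rightarrow> real"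
  assumes P: "prob_space P"
    and f_meas: "(\<lambda>(\<theta>, x). f \<theta> x) \<in> borel_measurable (P \<Otimes>\<^sub>M \<mu>)"
    and f_nonneg: "\<And>\<theta> x. \<theta> \<in> space P \<Longrightarrow> x \<in> space \<mu> \<Longrightarrow> f \<theta> x \<ge> 0"
    and f_dens: "\<And>\<theta>. \<theta> \<in> space P \<Longrightarrow> (\<integral>\<^sup>+ x. ennreal (f \<theta> x) \<partial>\<mu>) = 1"
    and hell: "\<And>\<theta>. \<theta> \<in> space P \<Longrightarrow> h \<le> hellinger_dist \<mu> (f \<theta>) f0" and "0 \<le> h"
  shows "(\<integral>\<^sup>+\<omega>. (\<integral>\<^sup>+\<theta>. ennreal (\<Prod>i<n. sqrt (f \<theta> (X i \<omega>) / f0 (X i \<omega>))) \<partial>P) \<partial>M)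
    \<le> ennreal ((1 - h\<^sup>2 / 2) ^ n)"
proof -
  interpret P: prob_space P by (rule P)
  interpret MP: pair_sigma_finite M P by unfold_locales
  have [measurable]: "(\<lambda>p. f (snd p) (X i (fst p))) \<in> borel_measurable (M \<Otimes>\<^sub>M P)" for i
    by (rule measurable_kernel_sample[OF f_meas])
  have [measurable]: "(\<lambda>p. ennreal (\<Prod>i<n. sqrt (f (snd p) (X i (fst p)) / f0 (X i (fst p)))))
      \<in> borel_measurable (M \<Otimes>\<^sub>M P)"
    by measurable
  have "(\<integral>\<^sup>+\<omega>. (\<integral>\<^sup>+\<theta>. ennreal (\<Prod>i<n. sqrt (f \<theta> (X i \<omega>) / f0 (X i \<omega>))) \<partial>P) \<partial>M)
      = (\<integral>\<^sup>+\<theta>. (\<integral>\<^sup>+\<omega>. ennreal (\<Prod>i<n. sqrt (f \<theta> (X i \<omega>) / f0 (X i \<omega>))) \<partial>M) \<partial>P)"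
    by (rule MP.Fubini'[symmetric]) (simp add: case_prod_beta')
  also have "\<dots> \<le> (\<integral>\<^sup>+\<theta>. ennreal ((1 - h\<^sup>2 / 2) ^ n) \<partial>P)"
  proof (rule nn_integral_mono)
    fix \<theta> assume \<theta>: "\<theta> \<in> space P"
    have f_section[measurable]: "f \<theta> \<in> borel_measurable \<mu>"
      using measurable_Pair2[OF f_meas \<theta>] by simp
    define g where "g x = ennreal (sqrt (f \<theta> x / f0 x))" for x
    have [measurable]: "g \<in> borel_measurable \<mu>" unfolding g_def by measurable
    define d where "d = hellinger_dist \<mu> (f \<theta>) f0"
    have affinity: "(\<integral>\<^sup>+x. ennreal (f0 x * sqrt (f \<theta> x / f0 x)) \<partial>\<mu>) = ennreal (1 - d\<^sup>2 / 2)"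
      and "d\<^sup>2 \<le> 2"
      using hellinger_affinity[OF f_section f0_measurable] f_nonneg[OF \<theta>] f0_nonneg
        f_dens[OF \<theta>] f0_integral_eq_1
      unfolding d_def by auto
    have "h\<^sup>2 \<le> d\<^sup>2" using hell[OF \<theta>] \<open>0 \<le> h\<close> unfolding d_def by (intro power_mono) auto
    have "(\<integral>\<^sup>+\<omega>. ennreal (\<Prod>i<n. sqrt (f \<theta> (X i \<omega>) / f0 (X i \<omega>))) \<partial>M) = (\<integral>\<^sup>+\<omega>. (\<Prod>i<n. g (X i \<omega>)) \<partial>M)"
    proof (intro nn_integral_cong)
      fix \<omega> assume "\<omega> \<in> space M"
      then have "0 \<le> sqrt (f \<theta> (X i \<omega>) / f0 (X i \<omega>))" for i
        using X_in_space f_nonneg[OF \<theta>] f0_nonneg by simp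
      then show "ennreal (\<Prod>i<n. sqrt (f \<theta> (X i \<omega>) / f0 (X i \<omega>))) = (\<Prod>i<n. g (X i \<omega>))"
        unfolding g_def by (simp add: prod_ennreal)
    qed
    also have "\<dots> = (\<Prod>i<n. \<integral>\<^sup>+\<omega>. g (X i \<omega>) \<partial>M)"
      by (intro indep_vars_nn_integral indep_vars_compose2[OF indep_vars_subset[OF indep]]) auto
    also have "\<dots> = (\<Prod>i<n. \<integral>\<^sup>+x. ennreal (f0 x) * g x \<partial>\<mu>)"
      by (intro prod.cong refl distributed_nn_integral[OF distributed, symmetric]) measurable
    also have "(\<integral>\<^sup>+x. ennreal (f0 x) * g x \<partial>\<mu>) = ennreal (1 - d\<^sup>2 / 2)"
      unfolding affinity[symmetric] g_def by (intro nn_integral_cong) (simp add: f0_nonneg ennreal_mult')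
    also have "(\<Prod>i<n. ennreal (1 - d\<^sup>2 / 2)) \<le> ennreal ((1 - h\<^sup>2 / 2) ^ n)"
      using \<open>d\<^sup>2 \<le> 2\<close> \<open>h\<^sup>2 \<le> d\<^sup>2\<close> by (simp add: ennreal_power power_mono)
    finally show "(\<integral>\<^sup>+\<omega>. ennreal (\<Prod>i<n. sqrt (f \<theta> (X i \<omega>) / f0 (X i \<omega>))) \<partial>M) \<le> ennreal ((1 - h\<^sup>2 / 2) ^ n)" .
  qed
  also have "\<dots> = ennreal ((1 - h\<^sup>2 / 2) ^ n)" by (simp add: P.emeasure_space_1)
  finally show ?thesis .
qed

lemma prior_ratio_integral_decays:
  fixes P :: "'p measure" and f :: "'p \<Rightarrow> 'b \<Rightarrow> real"
  assumes P: "prob_space P"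
    and f_meas: "(\<lambda>(\<theta>, x). f \<theta> x) \<in> borel_measurable (P \<Otimes>\<^sub>M \<mu>)"
    and f_nonneg: "\<And>\<theta> x. \<theta> \<in> space P \<Longrightarrow> x \<in> space \<mu> \<Longrightarrow> f \<theta> x \<ge> 0"
    and f_dens: "\<And>\<theta>. \<theta> \<in> space P \<Longrightarrow> (\<integral>\<^sup>+ x. ennreal (f \<theta> x) \<partial>\<mu>) = 1"
    and sup: "\<And>c::real. c > 0 \<Longrightarrow>
          AE \<omega> in M. eventually (\<lambda>n.
             (SUP \<theta>\<in>space P. ennreal (\<Prod>i<n. f \<theta> (X i \<omega>) / f0 (X i \<omega>)))
               < ennreal (exp (real n * c))) sequentially"
    and hell: "(INF \<theta>\<in>space P. hellinger_dist \<mu> (f \<theta>) f0) > 0"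
  obtains c where "c > 0"
    and "AE \<omega> in M. eventually (\<lambda>n. (\<integral>\<^sup>+\<theta>. ennreal (\<Prod>i<n. f \<theta> (X i \<omega>) / f0 (X i \<omega>)) \<partial>P)
      \<le> ennreal (exp (- c * real n))) sequentially"
proof -
  interpret P: prob_space P by (rule P)
  define h where "h = (INF \<theta>\<in>space P. hellinger_dist \<mu> (f \<theta>) f0)"
  have h_le: "h \<le> hellinger_dist \<mu> (f \<theta>) f0" if "\<theta> \<in> space P" for \<theta>
    unfolding h_def using that
    by (intro cINF_lower) (auto simp: bdd_below_def hellinger_dist_def intro!: exI[of _ 0])
  define q where "q = 1 - h\<^sup>2 / 2"
  have "0 \<le> q"
  proof -
    obtain \<theta> where \<theta>: "\<theta> \<in> space P" using P.not_empty by auto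
    have [measurable]: "f \<theta> \<in> borel_measurable \<mu>" using measurable_Pair2[OF f_meas \<theta>] by simp
    have "(hellinger_dist \<mu> (f \<theta>) f0)\<^sup>2 \<le> 2"
      using hellinger_affinity(2)[of "f \<theta>" \<mu> f0] f_nonneg[OF \<theta>] f0_nonneg f_dens[OF \<theta>]
        f0_integral_eq_1 by auto
    moreover have "h\<^sup>2 \<le> (hellinger_dist \<mu> (f \<theta>) f0)\<^sup>2"
      using h_le[OF \<theta>] hell unfolding h_def[symmetric] by (intro power_mono) auto
    ultimately show ?thesis unfolding q_def by simp
  qed
  define s where "s = (1 + q) / 2"
  have s: "q < s" "0 < s" "s < 1"
    using \<open>0 \<le> q\<close> hell unfolding s_def q_def h_def[symmetric] by auto
  define c where "c = - ln s"
  have "c > 0" using s by (simp add: c_def)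
  have s_pow: "s ^ n = exp (- c * real n)" for n
  proof -
    have "exp (- c * real n) = exp (real n * ln s)" by (simp add: c_def)
    then show ?thesis using s by (simp add: exp_of_nat_mult)
  qed
  define Z where "Z n \<omega> = (\<integral>\<^sup>+\<theta>. ennreal (\<Prod>i<n. sqrt (f \<theta> (X i \<omega>) / f0 (X i \<omega>))) \<partial>P)" for n \<omega>
  have [measurable]: "(\<lambda>p. f (snd p) (X i (fst p))) \<in> borel_measurable (M \<Otimes>\<^sub>M P)" for i
    by (rule measurable_kernel_sample[OF f_meas])
  have [measurable]: "Z n \<in> borel_measurable M" for n unfolding Z_def by measurable
  have Z_small: "AE \<omega> in M. eventually (\<lambda>n. Z n \<omega> < ennreal (s ^ n)) sequentially"
  proof (rule AE_eventually_less_power)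
    show "(\<integral>\<^sup>+\<omega>. Z n \<omega> \<partial>M) \<le> ennreal (q ^ n)" for n
      unfolding Z_def q_def
      by (rule sqrt_ratio_expectation_le[OF P f_meas f_nonneg f_dens h_le]) (use hell h_def in auto)
  qed (use \<open>0 \<le> q\<close> s in auto)
  show thesis
  proof (rule that)
    show "c / 2 > 0" using \<open>c > 0\<close> by simp
    show "AE \<omega> in M. eventually (\<lambda>n. (\<integral>\<^sup>+\<theta>. ennreal (\<Prod>i<n. f \<theta> (X i \<omega>) / f0 (X i \<omega>)) \<partial>P)
        \<le> ennreal (exp (- (c / 2) * real n))) sequentially"
      using Z_small sup[OF \<open>c > 0\<close>] AE_space
    proof eventually_elim
      case (elim \<omega>)
      have [measurable]: "(\<lambda>\<theta>. f \<theta> (X i \<omega>)) \<in> borel_measurable P" for i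
        by (rule measurable_kernel_at_sample[OF f_meas elim(3)])
      from elim(1,2) show ?case
      proof eventually_elim
        case (elim n)
        have "(\<integral>\<^sup>+\<theta>. ennreal (\<Prod>i<n. f \<theta> (X i \<omega>) / f0 (X i \<omega>)) \<partial>P)
            \<le> ennreal (exp (real n * c / 2)) * Z n \<omega>"
          unfolding Z_def real_sqrt_prod[symmetric]
        proof (rule nn_integral_le_exp_mult_sqrt)
          show "0 \<le> (\<Prod>i<n. f \<theta> (X i \<omega>) / f0 (X i \<omega>))" if "\<theta> \<in> space P" for \<theta>
            using X_in_space[OF \<open>\<omega> \<in> space M\<close>] f_nonneg[OF that] f0_nonneg by (intro prod_nonneg) auto
          show "(SUP \<theta>\<in>space P. ennreal (\<Prod>i<n. f \<theta> (X i \<omega>) / f0 (X i \<omega>)))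
              < ennreal (exp (2 * (real n * c / 2)))"
            using elim(2) by simp
        qed measurable
        also have "\<dots> \<le> ennreal (exp (real n * c / 2)) * ennreal (s ^ n)"
          using elim(1) by (intro mult_left_mono) auto
        also have "\<dots> = ennreal (exp (- (c / 2) * real n))"
          unfolding s_pow by (simp add: ennreal_mult[symmetric] exp_add[symmetric] algebra_simps)
        finally show ?case .
      qed
    qed
  qed
qed

lemma log_ratio_sum_eventually_le:
  assumes g_meas[measurable]: "g \<in> borel_measurable \<mu>"
    and g_nonneg: "\<And>x. x \<in> space \<mu> \<Longrightarrow> g x \<ge> 0"
    and g_dens: "(\<integral>\<^sup>+ x. ennreal (g x) \<partial>\<mu>) = 1"
    and kl: "kl_div \<mu> f0 g < ereal \<delta>" and "\<delta> > 0"
  shows "AE \<omega> in M. (\<forall>i. 0 < f0 (X i \<omega>) \<longrightarrow> 0 < g (X i \<omega>)) \<and>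
    (\<exists>N. \<forall>n\<ge>N. (\<Sum>i<n. log_ratio f0 g (X i \<omega>)) \<le> real n * (2 * \<delta>))"
proof -
  note kl_facts = kl_div_lessD[OF f0_measurable g_meas f0_nonneg g_nonneg g_dens kl]
  have [measurable]: "log_ratio f0 g \<in> borel_measurable \<mu>" unfolding log_ratio_def by measurable
  have rate: "real n * ((\<integral>x. f0 x * log_ratio f0 g x \<partial>\<mu>) + \<delta>) \<le> real n * (2 * \<delta>)" for n
    using kl_facts(3) by (intro mult_left_mono) auto
  have "AE \<omega> in M. \<forall>i. 0 < f0 (X i \<omega>) \<longrightarrow> 0 < g (X i \<omega>)"
    unfolding AE_all_countable
  proof (intro allI AE_sample)
    show "AE x in \<mu>. 0 < f0 x \<longrightarrow> 0 < f0 x \<longrightarrow> 0 < g x"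
      using kl_facts(1) by (auto elim: eventually_mono)
  qed measurable
  moreover have "AE \<omega> in M. eventually (\<lambda>n. (\<Sum>i<n. log_ratio f0 g (X i \<omega>))
      \<le> real n * ((\<integral>x. f0 x * log_ratio f0 g x \<partial>\<mu>) + \<delta>)) sequentially"
    by (rule sample_sum_eventually_le[OF _ kl_facts(2) \<open>\<delta> > 0\<close>]) measurable
  ultimately show ?thesis
  proof eventually_elim
    case (elim \<omega>)
    then obtain N where "\<forall>n\<ge>N. (\<Sum>i<n. log_ratio f0 g (X i \<omega>))
        \<le> real n * ((\<integral>x. f0 x * log_ratio f0 g x \<partial>\<mu>) + \<delta>)"
      unfolding eventually_sequentially by blast
    with elim(1) rate show ?case by (blast intro: order.trans)
  qed
qed

lemma prior_ratio_integral_subexponential: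
  fixes P :: "'p measure" and f :: "'p \<Rightarrow> 'b \<Rightarrow> real"
  assumes P: "prob_space P"
    and f_meas: "(\<lambda>(\<theta>, x). f \<theta> x) \<in> borel_measurable (P \<Otimes>\<^sub>M \<mu>)"
    and f_nonneg: "\<And>\<theta> x. \<theta> \<in> space P \<Longrightarrow> x \<in> space \<mu> \<Longrightarrow> f \<theta> x \<ge> 0"
    and f_dens: "\<And>\<theta>. \<theta> \<in> space P \<Longrightarrow> (\<integral>\<^sup>+ x. ennreal (f \<theta> x) \<partial>\<mu>) = 1"
    and KL_support: "\<And>\<epsilon>::real. \<epsilon> > 0 \<Longrightarrow>
          emeasure P {\<theta> \<in> space P. kl_div \<mu> f0 (f \<theta>) < ereal \<epsilon>} > 0"
    and "\<epsilon> > 0"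
  shows "AE \<omega> in M. eventually (\<lambda>n. ennreal (exp (- \<epsilon> * real n))
    \<le> (\<integral>\<^sup>+\<theta>. ennreal (\<Prod>i<n. f \<theta> (X i \<omega>) / f0 (X i \<omega>)) \<partial>P)) sequentially"
proof -
  interpret P: prob_space P by (rule P)
  interpret MP: pair_sigma_finite M P by unfold_locales
  have [measurable]: "(\<lambda>p. f (snd p) (X i (fst p))) \<in> borel_measurable (M \<Otimes>\<^sub>M P)" for i
    by (rule measurable_kernel_sample[OF f_meas])
  have f_section[measurable]: "f \<theta> \<in> borel_measurable \<mu>" if "\<theta> \<in> space P" for \<theta>
    using measurable_Pair2[OF f_meas that] by simp
  define \<delta> where "\<delta> = \<epsilon> / 3"
  have "\<delta> > 0" using \<open>\<epsilon> > 0\<close> by (simp add: \<delta>_def)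
  define A where "A = {\<theta> \<in> space P. kl_div \<mu> f0 (f \<theta>) < ereal \<delta>}"
  have A_pos: "emeasure P A > 0" unfolding A_def by (rule KL_support) fact
  then have [measurable]: "A \<in> sets P" using emeasure_notin_sets by fastforce
  define good where "good \<theta> \<omega> \<longleftrightarrow> (\<forall>i. 0 < f0 (X i \<omega>) \<longrightarrow> 0 < f \<theta> (X i \<omega>)) \<and>
      (\<exists>N. \<forall>n\<ge>N. (\<Sum>i<n. log_ratio f0 (f \<theta>) (X i \<omega>)) \<le> real n * (2 * \<delta>))" for \<theta> \<omega>
  have good_AE: "AE \<omega> in M. good \<theta> \<omega>" if "\<theta> \<in> A" for \<theta>
  proof -
    have \<theta>: "\<theta> \<in> space P" and kl: "kl_div \<mu> f0 (f \<theta>) < ereal \<delta>" using that by (auto simp: A_def)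
    show ?thesis
      unfolding good_def by (rule log_ratio_sum_eventually_le[OF f_section[OF \<theta>] f_nonneg[OF \<theta>] f_dens[OF \<theta>] kl \<open>\<delta> > 0\<close>])
  qed
  have "AE \<theta> in P. AE \<omega> in M. \<theta> \<in> A \<longrightarrow> good \<theta> \<omega>"
  proof (rule AE_I2)
    fix \<theta> assume "\<theta> \<in> space P"
    show "AE \<omega> in M. \<theta> \<in> A \<longrightarrow> good \<theta> \<omega>" using good_AE[of \<theta>] by (cases "\<theta> \<in> A") auto
  qed
  moreover have "{p \<in> space (M \<Otimes>\<^sub>M P). snd p \<in> A \<longrightarrow> good (snd p) (fst p)} \<in> sets (M \<Otimes>\<^sub>M P)"
    unfolding good_def log_ratio_def by measurable
  ultimately have "AE \<omega> in M. AE \<theta> in P. \<theta> \<in> A \<longrightarrow> good \<theta> \<omega>"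
    using MP.AE_commute[of "\<lambda>\<omega> \<theta>. \<theta> \<in> A \<longrightarrow> good \<theta> \<omega>"] by simp
  then show ?thesis using AE_sample_pos AE_space
  proof eventually_elim
    case (elim \<omega>)
    have [measurable]: "(\<lambda>\<theta>. f \<theta> (X i \<omega>)) \<in> borel_measurable P" for i
      by (rule measurable_kernel_at_sample[OF f_meas elim(3)])
    have lower: "\<exists>N. \<forall>n\<ge>N. ennreal (exp (- (2 * \<delta>) * real n))
        \<le> ennreal (\<Prod>i<n. f \<theta> (X i \<omega>) / f0 (X i \<omega>))" if "good \<theta> \<omega>" for \<theta>
    proof -
      from that obtain N where
        pos: "\<forall>i. 0 < f0 (X i \<omega>) \<longrightarrow> 0 < f \<theta> (X i \<omega>)" and
        N: "\<forall>n\<ge>N. (\<Sum>i<n. log_ratio f0 (f \<theta>) (X i \<omega>)) \<le> real n * (2 * \<delta>)"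
        unfolding good_def by blast
      have "exp (- (2 * \<delta>) * real n) \<le> (\<Prod>i<n. f \<theta> (X i \<omega>) / f0 (X i \<omega>))" if "n \<ge> N" for n
        using pos elim(2) N that by (intro exp_neg_le_prod_ratio) auto
      then show ?thesis by (blast intro: ennreal_leI)
    qed
    have lower_AE: "AE \<theta> in P. \<theta> \<in> A \<longrightarrow>
        (\<exists>N. \<forall>n\<ge>N. ennreal (exp (- (2 * \<delta>) * real n)) \<le> ennreal (\<Prod>i<n. f \<theta> (X i \<omega>) / f0 (X i \<omega>)))"
      using elim(1) by (rule eventually_mono) (blast intro: lower)
    show ?case
    proof (rule P.nn_integral_eventually_ge_exp[OF _ _ A_pos lower_AE])
      show "2 * \<delta> < \<epsilon>" using \<open>\<delta> > 0\<close> by (simp add: \<delta>_def)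
    qed measurable
  qed
qed

end

theorem theorem1:
  fixes M :: "'w measure" and \<mu> :: "'b measure"
    and X :: "nat \<Rightarrow> 'w \<Rightarrow> 'b"
    and f0 :: "'b \<Rightarrow> real"
    and P1 :: "'p measure" and f1 :: "'p \<Rightarrow> 'b \<Rightarrow> real"
    and P2 :: "'q measure" and f2 :: "'q \<Rightarrow> 'b \<Rightarrow> real"
  assumes M: "prob_space M"
    and mu: "sigma_finite_measure \<mu>"
    and f0_meas: "f0 \<in> borel_measurable \<mu>"
    and f0_nonneg: "\<And>x. x \<in> space \<mu> \<Longrightarrow> f0 x \<ge> 0"
    and indep: "prob_space.indep_vars M (\<lambda>_. \<mu>) X UNIV"
    and distr: "\<And>i. distributed M \<mu> (X i) (\<lambda>x. ennreal (f0 x))"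
    and P1: "prob_space P1" and P2: "prob_space P2"
    and f1_meas: "(\<lambda>(\<theta>, x). f1 \<theta> x) \<in> borel_measurable (P1 \<Otimes>\<^sub>M \<mu>)"
    and f2_meas: "(\<lambda>(\<theta>, x). f2 \<theta> x) \<in> borel_measurable (P2 \<Otimes>\<^sub>M \<mu>)"
    and f1_nonneg: "\<And>\<theta> x. \<theta> \<in> space P1 \<Longrightarrow> x \<in> space \<mu> \<Longrightarrow> f1 \<theta> x \<ge> 0"
    and f2_nonneg: "\<And>\<theta> x. \<theta> \<in> space P2 \<Longrightarrow> x \<in> space \<mu> \<Longrightarrow> f2 \<theta> x \<ge> 0"
    and f1_dens: "\<And>\<theta>. \<theta> \<in> space P1 \<Longrightarrow> (\<integral>\<^sup>+ x. ennreal (f1 \<theta> x) \<partial>\<mu>) = 1"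
    and f2_dens: "\<And>\<theta>. \<theta> \<in> space P2 \<Longrightarrow> (\<integral>\<^sup>+ x. ennreal (f2 \<theta> x) \<partial>\<mu>) = 1"
    and KL_support: "\<And>\<epsilon>::real. \<epsilon> > 0 \<Longrightarrow>
          emeasure P2 {\<theta> \<in> space P2. kl_div \<mu> f0 (f2 \<theta>) < ereal \<epsilon>} > 0"
    and sup_cond: "\<And>c::real. c > 0 \<Longrightarrow>
          AE \<omega> in M. eventually (\<lambda>n.
             (SUP \<theta>\<in>space P1. ennreal (\<Prod>i<n. f1 \<theta> (X i \<omega>) / f0 (X i \<omega>)))
               < ennreal (exp (real n * c))) sequentially"
    and hell: "(INF \<theta>\<in>space P1. hellinger_dist \<mu> (f1 \<theta>) f0) > 0"
  shows "AE \<omega> in M. (\<lambda>n. bayes_factor P1 f1 P2 f2 (\<lambda>i. X i \<omega>) n) \<longlonglongrightarrow> 0"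
proof -
  interpret iid_sample M \<mu> X f0
    using M f0_meas f0_nonneg indep distr by (simp add: iid_sample_def iid_sample_axioms_def)
  obtain c where c: "c > 0" and numerator: "AE \<omega> in M. eventually (\<lambda>n.
      (\<integral>\<^sup>+\<theta>. ennreal (\<Prod>i<n. f1 \<theta> (X i \<omega>) / f0 (X i \<omega>)) \<partial>P1) \<le> ennreal (exp (- c * real n))) sequentially"
    by (rule prior_ratio_integral_decays[OF P1 f1_meas f1_nonneg f1_dens sup_cond hell])
  have denominator: "AE \<omega> in M. eventually (\<lambda>n. ennreal (exp (- (c / 2) * real n))
      \<le> (\<integral>\<^sup>+\<theta>. ennreal (\<Prod>i<n. f2 \<theta> (X i \<omega>) / f0 (X i \<omega>)) \<partial>P2)) sequentially"
    using c by (intro prior_ratio_integral_subexponential[OF P2 f2_meas f2_nonneg f2_dens KL_support]) auto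
  show ?thesis
    using numerator denominator AE_sample_pos AE_space
  proof eventually_elim
    case (elim \<omega>)
    note [measurable] = measurable_kernel_at_sample[OF f1_meas elim(4)]
      measurable_kernel_at_sample[OF f2_meas elim(4)]
    have bound: "eventually (\<lambda>n. bayes_factor P1 f1 P2 f2 (\<lambda>i. X i \<omega>) n \<le> ennreal (exp (- (c / 2) * real n)))
        sequentially"
      using elim(1,2)
    proof eventually_elim
      case (elim n)
      have "exp (- c * real n) / exp (- (c / 2) * real n) = exp (- (c / 2) * real n)"
        by (simp add: exp_diff[symmetric] algebra_simps)
      then show ?case
        using bayes_factor_le[where x = "\<lambda>i. X i \<omega>", OF _ _ _ elim] \<open>\<forall>i. 0 < f0 (X i \<omega>)\<close>
        by simp
    qed
    have limit: "(\<lambda>n. ennreal (exp (- (c / 2) * real n))) \<longlonglongrightarrow> 0"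
      using tendsto_ennrealI[OF exp_neg_mult_LIMSEQ_zero[of "c / 2"]] c by simp
    show ?case by (rule tendsto_sandwich[OF _ bound tendsto_const limit]) simp
  qed
qed

end
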